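(* Let $S$ be a locally compact Hausdorff space with its Borel $\sigma$-algebra $\mathscr{S}$, let $n\le N$ be positive integers, and let $X=(X_1,\ldots,X_n)$ be an exchangeable random element of $S^n$ such that the law of $X_1$ is outer regular and tight. Then $X$ is $N$-extendible if and only if $\|\mathcal E^N_n\|=1$, where \[ \|\mathcal E^N_n\| := \sup\Big\{ |\mathbb{E}\, g(X_1,\ldots,X_n)| :\ g:S^n\to\mathbb{R} \text{ bounded measurable},\ |U^N_n g(x)|\le 1 \text{ for all } x\in S^N\Big\}. \]
   Context: $S^n$ carries the product $\sigma$-algebra $\mathscr{S}^n$. A random element $(X_1,\ldots,X_n)$ of $S^n$ is exchangeable if its law is invariant under all $n!$ permutations of coordinates. For $N\ge n$, $X$ is $N$-extendible if there is an exchangeable random element $(Y_1,\ldots,Y_N)$ of $S^N$ with $(Y_1,\ldots,Y_n)$ equal in distribution to $(X_1,\ldots,X_n)$. $\mathfrak S[n,N]$ is the set of injections $\{1,\ldots,n\}\to\{1,\ldots,N\}$, $(N)_n=N(N-1)\cdots(N-n+1)=|\mathfrak S[n,N]|$, and for $g:S^n\to\mathbb{R}$, $U^N_n g(x_1,\ldots,x_N)=\frac{1}{(N)_n}\sum_{\sigma\in\mathfrak S[n,N]} g(x_{\sigma(1)},\ldots,x_{\sigma(n)})$. A probability measure $P$ on $S$ is tight if for every $\epsilon>0$ there is a compact $K$ with $P(K)\ge 1-\epsilon$, and outer regular if $P(A)=\inf\{P(O): O\supset A \text{ open}\}$ for all $A\in\mathscr{S}$. *)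

theory Defs
  imports "HOL-Probability.Probability"
begin

definition Sn :: "nat \<Rightarrow> ('a::topological_space) measure \<Rightarrow> (nat \<Rightarrow> 'a) measure" where
  "Sn n B = PiM {..<n} (\<lambda>_. B)"

abbreviation SB :: "nat \<Rightarrow> (nat \<Rightarrow> 'a::topological_space) measure" where
  "SB n \<equiv> Sn n borel"

definition exchangeable_law :: "nat \<Rightarrow> (nat \<Rightarrow> 'a::topological_space) measure \<Rightarrow> bool" where
  "exchangeable_law n P \<longleftrightarrow>
     (\<forall>\<sigma>. \<sigma> permutes {..<n} \<longrightarrow> distr P (SB n) (\<lambda>x. \<lambda>i\<in>{..<n}. x (\<sigma> i)) = P)"

definition exchangeable :: "'w measure \<Rightarrow> nat \<Rightarrow> ('w \<Rightarrow> nat \<Rightarrow> 'a::topological_space) \<Rightarrow> bool" where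
  "exchangeable M n X \<longleftrightarrow> exchangeable_law n (distr M (SB n) X)"

text \<open>N-extendibility: there is an exchangeable random element Y of S^N (given by its law Q)
  whose first n coordinates have the same law as X.\<close>
definition extendible :: "'w measure \<Rightarrow> nat \<Rightarrow> nat \<Rightarrow> ('w \<Rightarrow> nat \<Rightarrow> 'a::topological_space) \<Rightarrow> bool" where
  "extendible M n N X \<longleftrightarrow>
     (\<exists>Q. prob_space Q \<and> sets Q = sets (SB N) \<and> exchangeable_law N Q \<and>
          distr Q (SB n) (\<lambda>y. \<lambda>i\<in>{..<n}. y i) = distr M (SB n) X)"

text \<open>Injections {1..n} -> {1..N} (here 0-based).\<close>
definition injs :: "nat \<Rightarrow> nat \<Rightarrow> (nat \<Rightarrow> nat) set" where
  "injs n N = {\<sigma>. \<sigma> \<in> {..<n} \<rightarrow>\<^sub>E {..<N} \<and> inj_on \<sigma> {..<n}}"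

definition ffact :: "nat \<Rightarrow> nat \<Rightarrow> real" where
  "ffact N n = (\<Prod>i<n. real (N - i))"

definition U_op :: "nat \<Rightarrow> nat \<Rightarrow> ((nat \<Rightarrow> 'a) \<Rightarrow> real) \<Rightarrow> (nat \<Rightarrow> 'a) \<Rightarrow> real" where
  "U_op N n g x = (1 / ffact N n) * (\<Sum>\<sigma>\<in>injs n N. g (\<lambda>i\<in>{..<n}. x (\<sigma> i)))"

text \<open>The norm of the extension functional, as an extended real (it may be infinite).\<close>
definition ext_norm :: "'w measure \<Rightarrow> nat \<Rightarrow> nat \<Rightarrow> ('w \<Rightarrow> nat \<Rightarrow> 'a::topological_space) \<Rightarrow> ereal" where
  "ext_norm M n N X =
     (SUP g \<in> {g. g \<in> borel_measurable (SB n) \<and> bounded (g ` space (SB n)) \<and>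
                 (\<forall>x\<in>space (SB N). \<bar>U_op N n g x\<bar> \<le> 1)}.
        ereal \<bar>integral\<^sup>L M (\<lambda>w. g (X w))\<bar>)"

definition tight_measure :: "('a::topological_space) measure \<Rightarrow> bool" where
  "tight_measure P \<longleftrightarrow> (\<forall>\<epsilon>>0. \<exists>K. compact K \<and> K \<in> sets P \<and> measure P K \<ge> 1 - \<epsilon>)"

definition outer_regular :: "('a::topological_space) measure \<Rightarrow> bool" where
  "outer_regular P \<longleftrightarrow>
     (\<forall>A\<in>sets P. emeasure P A = (INF V \<in> {V. open V \<and> A \<subseteq> V}. emeasure P V))"

end

theory Submission
  imports Defs "HOL-Library.Function_Algebras" "HOL-Combinatorics.Permutations"
begin

text \<open>If X extends to an exchangeable Y on S^N, exchangeability of Y gives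
  E g(X) = E (U g)(Y), hence |E g(X)| \<le> sup |U g|. Conversely, under this bound the functional
  U g \<mapsto> E g(X) is well defined and dominated by the sup norm on the bounded measurable functions
  on S^N; a Hahn-Banach extension of it, averaged over the permutations of the N coordinates, is
  positive, normalised and symmetric, and on indicators it defines an exchangeable finitely
  additive probability whose n-marginal is the law of X. All its one-dimensional marginals are
  the law of X_1, which is tight and outer regular, so finite unions of Borel boxes can be
  approximated from inside by compact sets. By compactness this gives continuity at the empty
  set on that ring, and Caratheodory's theorem yields the law of Y.\<close>

section \<open>The Hahn-Banach dominated extension theorem\<close>

instantiation "fun" :: (type, real_vector) real_vector
begin

definition scaleR_fun :: "real \<Rightarrow> ('a \<Rightarrow> 'b) \<Rightarrow> 'a \<Rightarrow> 'b" where
  "scaleR_fun c f = (\<lambda>x. c *\<^sub>R f x)"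

instance by standard (simp_all add: scaleR_fun_def fun_eq_iff algebra_simps)

end

lemma scaleR_fun_apply [simp]: "(c *\<^sub>R f) x = c *\<^sub>R f x"
  by (simp add: scaleR_fun_def)

lemma sum_fun_apply: "(\<Sum>i\<in>I. f i) x = (\<Sum>i\<in>I. f i x)"
  by (induction I rule: infinite_finite_induct) auto

text \<open>Partial linear functionals below p are handled through their graphs, so that Zorn's lemma
  can be applied to the inclusion order.\<close>
definition dominated_linear_graph ::
    "'v::real_vector set \<Rightarrow> ('v \<Rightarrow> real) \<Rightarrow> ('v \<times> real) set \<Rightarrow> bool"
  where "dominated_linear_graph B p G \<longleftrightarrow> single_valued G \<and>
     (\<forall>u y v z. (u, y) \<in> G \<longrightarrow> (v, z) \<in> G \<longrightarrow> (u + v, y + z) \<in> G) \<and>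
     (\<forall>u y c. (u, y) \<in> G \<longrightarrow> (c *\<^sub>R u, c * y) \<in> G) \<and>
     (\<forall>u y. (u, y) \<in> G \<longrightarrow> u \<in> B \<and> y \<le> p u)"

lemma dominated_linear_graphI:
  assumes "\<And>u y y'. (u, y) \<in> G \<Longrightarrow> (u, y') \<in> G \<Longrightarrow> y = y'"
    and "\<And>u y v z. (u, y) \<in> G \<Longrightarrow> (v, z) \<in> G \<Longrightarrow> (u + v, y + z) \<in> G"
    and "\<And>u y c. (u, y) \<in> G \<Longrightarrow> (c *\<^sub>R u, c * y) \<in> G"
    and "\<And>u y. (u, y) \<in> G \<Longrightarrow> u \<in> B"
    and "\<And>u y. (u, y) \<in> G \<Longrightarrow> y \<le> p u"
  shows "dominated_linear_graph B p G"
  using assms unfolding dominated_linear_graph_def single_valued_def by blast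

lemma
  assumes "dominated_linear_graph B p G"
  shows dominated_linear_graph_unique: "(u, y) \<in> G \<Longrightarrow> (u, y') \<in> G \<Longrightarrow> y = y'"
    and dominated_linear_graph_add: "(u, y) \<in> G \<Longrightarrow> (v, z) \<in> G \<Longrightarrow> (u + v, y + z) \<in> G"
    and dominated_linear_graph_scaleR: "(u, y) \<in> G \<Longrightarrow> (c *\<^sub>R u, c * y) \<in> G"
    and dominated_linear_graph_in: "(u, y) \<in> G \<Longrightarrow> u \<in> B"
    and dominated_linear_graph_le: "(u, y) \<in> G \<Longrightarrow> y \<le> p u"
  using assms unfolding dominated_linear_graph_def single_valued_def by blast+

lemma dominated_linear_graph_Union:
  assumes "subset.chain {G. dominated_linear_graph B p G} C"
  shows "dominated_linear_graph B p (\<Union>C)"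
proof -
  have G: "\<And>G. G \<in> C \<Longrightarrow> dominated_linear_graph B p G"
    and total: "\<And>G H. G \<in> C \<Longrightarrow> H \<in> C \<Longrightarrow> G \<subseteq> H \<or> H \<subseteq> G"
    using assms unfolding subset.chain_def by blast+
  have common: "\<exists>G\<in>C. a \<in> G \<and> b \<in> G" if "a \<in> \<Union>C" "b \<in> \<Union>C" for a b
    using that total by blast
  show ?thesis
  proof (rule dominated_linear_graphI)
    fix u y y' assume "(u, y) \<in> \<Union>C" "(u, y') \<in> \<Union>C"
    with common G show "y = y'" by (metis dominated_linear_graph_unique)
  next
    fix u y v z assume "(u, y) \<in> \<Union>C" "(v, z) \<in> \<Union>C"
    with common G show "(u + v, y + z) \<in> \<Union>C" by (metis UnionI dominated_linear_graph_add)
  next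
    fix u y c assume "(u, y) \<in> \<Union>C"
    with G show "(c *\<^sub>R u, c * y) \<in> \<Union>C" by (metis UnionE UnionI dominated_linear_graph_scaleR)
  next
    fix u y assume "(u, y) \<in> \<Union>C"
    with G show "u \<in> B" by (metis UnionE dominated_linear_graph_in)
  next
    fix u y assume "(u, y) \<in> \<Union>C"
    with G show "y \<le> p u" by (metis UnionE dominated_linear_graph_le)
  qed
qed

text \<open>The classical one-dimensional step: the value c assigned to the new vector must lie
  between the supremum of the lower and the infimum of the upper constraints.\<close>
lemma dominated_linear_graph_extend:
  fixes p :: "'v::real_vector \<Rightarrow> real"
  assumes B: "subspace B"
    and p_add: "\<And>u v. u \<in> B \<Longrightarrow> v \<in> B \<Longrightarrow> p (u + v) \<le> p u + p v"
    and p_scaleR: "\<And>c u. u \<in> B \<Longrightarrow> c > 0 \<Longrightarrow> p (c *\<^sub>R u) = c * p u"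
    and G: "dominated_linear_graph B p G" "G \<noteq> {}"
    and x: "x \<in> B" "x \<notin> Domain G"
  shows "\<exists>G'. dominated_linear_graph B p G' \<and> G \<subseteq> G' \<and> x \<in> Domain G'"
proof -
  have GB: "\<And>u y. (u, y) \<in> G \<Longrightarrow> u \<in> B" using G(1) by (rule dominated_linear_graph_in)
  have separated: "y - p (w - x) \<le> p (v + x) - z" if "(w, y) \<in> G" "(v, z) \<in> G" for w y v z
  proof -
    have "y + z \<le> p ((w - x) + (v + x))"
      using dominated_linear_graph_le[OF G(1) dominated_linear_graph_add[OF G(1) that]] by simp
    also have "\<dots> \<le> p (w - x) + p (v + x)"
      using GB that x(1) B by (intro p_add subspace_diff subspace_add) auto
    finally show ?thesis by simp
  qed
  obtain w0 y0 where w0: "(w0, y0) \<in> G" using G(2) by auto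
  define S where "S = {y - p (w - x) | w y. (w, y) \<in> G}"
  define c where "c = Sup S"
  have S: "S \<noteq> {}" "bdd_above S"
    using w0 separated unfolding S_def bdd_above_def by blast+
  have c_lower: "y - p (w - x) \<le> c" if "(w, y) \<in> G" for w y
    unfolding c_def using that S by (intro cSup_upper) (auto simp: S_def)
  have c_upper: "c \<le> p (v + x) - z" if "(v, z) \<in> G" for v z
    unfolding c_def using that S separated by (intro cSup_least) (auto simp: S_def)
  define G' where "G' = {(w + t *\<^sub>R x, y + t * c) | w y t. (w, y) \<in> G}"
  have unique_t: "t = t'" if "(w, y) \<in> G" "(w', y') \<in> G" "w + t *\<^sub>R x = w' + t' *\<^sub>R x"
    for w y t w' y' t'
  proof (rule ccontr)
    assume "t \<noteq> t'"
    have "(t - t') *\<^sub>R x = t *\<^sub>R x - t' *\<^sub>R x" by (rule scaleR_diff_left)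
    also have "\<dots> = w' - w"
      using that(3) by (metis add_diff_eq diff_add_eq_diff_diff_swap add.commute
          diff_diff_eq2 diff_add_cancel)
    finally have diff: "(t - t') *\<^sub>R x = w' - w" .
    have "x = (1 / (t - t')) *\<^sub>R ((t - t') *\<^sub>R x)" using \<open>t \<noteq> t'\<close> by simp
    also have "\<dots> = (1 / (t - t')) *\<^sub>R (w' + (-1) *\<^sub>R w)" by (simp add: diff)
    finally have "x = (1 / (t - t')) *\<^sub>R (w' + (-1) *\<^sub>R w)" .
    moreover have "((1 / (t - t')) *\<^sub>R (w' + (-1) *\<^sub>R w), (1 / (t - t')) * (y' + (-1) * y)) \<in> G"
      using that(1,2) G(1)
      by (intro dominated_linear_graph_scaleR dominated_linear_graph_add) auto
    ultimately show False using x(2) by (auto simp: Domain.simps)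
  qed
  have "dominated_linear_graph B p G'"
  proof (rule dominated_linear_graphI)
    fix u y y' assume "(u, y) \<in> G'" "(u, y') \<in> G'"
    then obtain w1 y1 t1 w2 y2 t2 where h: "(w1, y1) \<in> G" "(w2, y2) \<in> G"
      "u = w1 + t1 *\<^sub>R x" "u = w2 + t2 *\<^sub>R x" "y = y1 + t1 * c" "y' = y2 + t2 * c"
      unfolding G'_def by blast
    then have "t1 = t2" using unique_t by metis
    then show "y = y'" using h dominated_linear_graph_unique[OF G(1)] by auto
  next
    fix u y v z assume "(u, y) \<in> G'" "(v, z) \<in> G'"
    then obtain w1 y1 t1 w2 y2 t2 where h: "(w1, y1) \<in> G" "(w2, y2) \<in> G"
      "u = w1 + t1 *\<^sub>R x" "v = w2 + t2 *\<^sub>R x" "y = y1 + t1 * c" "z = y2 + t2 * c"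
      unfolding G'_def by blast
    have "((w1 + w2) + (t1 + t2) *\<^sub>R x, (y1 + y2) + (t1 + t2) * c) \<in> G'"
      using dominated_linear_graph_add[OF G(1) h(1,2)] unfolding G'_def by blast
    then show "(u + v, y + z) \<in> G'" by (simp add: h algebra_simps)
  next
    fix u y a assume "(u, y) \<in> G'"
    then obtain w1 y1 t1 where h: "(w1, y1) \<in> G" "u = w1 + t1 *\<^sub>R x" "y = y1 + t1 * c"
      unfolding G'_def by blast
    have "(a *\<^sub>R w1 + (a * t1) *\<^sub>R x, a * y1 + (a * t1) * c) \<in> G'"
      using dominated_linear_graph_scaleR[OF G(1) h(1)] unfolding G'_def by blast
    then show "(a *\<^sub>R u, a * y) \<in> G'" by (simp add: h algebra_simps)
  next
    fix u y assume "(u, y) \<in> G'"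
    then obtain w1 y1 t1 where h: "(w1, y1) \<in> G" "u = w1 + t1 *\<^sub>R x"
      unfolding G'_def by blast
    then show "u \<in> B" using GB x(1) B by (simp add: subspace_add subspace_scale)
  next
    fix u y assume "(u, y) \<in> G'"
    then obtain w1 y1 t1 where h: "(w1, y1) \<in> G" "u = w1 + t1 *\<^sub>R x" "y = y1 + t1 * c"
      unfolding G'_def by blast
    have w1B: "w1 \<in> B" using GB h(1) .
    consider "t1 = 0" | "t1 > 0" | "t1 < 0" by linarith
    then show "y \<le> p u"
    proof cases
      case 1
      then show ?thesis using h dominated_linear_graph_le[OF G(1)] by simp
    next
      case 2
      have "c \<le> p ((1 / t1) *\<^sub>R w1 + x) - (1 / t1) * y1"
        by (rule c_upper, rule dominated_linear_graph_scaleR[OF G(1) h(1)])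
      then have "y1 + t1 * c \<le> t1 * p ((1 / t1) *\<^sub>R w1 + x)"
        using 2 by (simp add: field_simps)
      also have "\<dots> = p (t1 *\<^sub>R ((1 / t1) *\<^sub>R w1 + x))"
        by (rule p_scaleR[symmetric]) (use 2 w1B x(1) B in \<open>auto intro: subspace_add subspace_scale\<close>)
      also have "t1 *\<^sub>R ((1 / t1) *\<^sub>R w1 + x) = u" using 2 by (simp add: h scaleR_add_right)
      finally show ?thesis using h by simp
    next
      case 3
      define s where "s = - t1"
      have s: "s > 0" using 3 by (simp add: s_def)
      have "(1 / s) * y1 - p ((1 / s) *\<^sub>R w1 - x) \<le> c"
        by (rule c_lower, rule dominated_linear_graph_scaleR[OF G(1) h(1)])
      then have "y1 - s * c \<le> s * p ((1 / s) *\<^sub>R w1 - x)"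
        using s by (simp add: field_simps)
      also have "\<dots> = p (s *\<^sub>R ((1 / s) *\<^sub>R w1 - x))"
        by (rule p_scaleR[symmetric]) (use s w1B x(1) B in \<open>auto intro: subspace_diff subspace_scale\<close>)
      also have "s *\<^sub>R ((1 / s) *\<^sub>R w1 - x) = u" using s by (simp add: h s_def scaleR_diff_right)
      finally show ?thesis using h by (simp add: s_def)
    qed
  qed
  moreover have "G \<subseteq> G'"
  proof (rule subrelI)
    fix w y assume "(w, y) \<in> G"
    then have "(w + 0 *\<^sub>R x, y + 0 * c) \<in> G'" unfolding G'_def by blast
    then show "(w, y) \<in> G'" by simp
  qed
  moreover have "(0 + 1 *\<^sub>R x, 0 + 1 * c) \<in> G'"
    using dominated_linear_graph_scaleR[OF G(1) w0, of 0] unfolding G'_def by fastforce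
  ultimately show ?thesis by auto
qed

theorem hahn_banach_dominated_extension:
  fixes f p :: "'v::real_vector \<Rightarrow> real"
  assumes B: "subspace B" and V: "subspace V" "V \<subseteq> B"
    and f_add: "\<And>u v. u \<in> V \<Longrightarrow> v \<in> V \<Longrightarrow> f (u + v) = f u + f v"
    and f_scaleR: "\<And>c u. u \<in> V \<Longrightarrow> f (c *\<^sub>R u) = c * f u"
    and p_add: "\<And>u v. u \<in> B \<Longrightarrow> v \<in> B \<Longrightarrow> p (u + v) \<le> p u + p v"
    and p_scaleR: "\<And>c u. u \<in> B \<Longrightarrow> c > 0 \<Longrightarrow> p (c *\<^sub>R u) = c * p u"
    and f_le: "\<And>u. u \<in> V \<Longrightarrow> f u \<le> p u"
  shows "\<exists>F. (\<forall>u\<in>V. F u = f u) \<and> (\<forall>u\<in>B. \<forall>v\<in>B. F (u + v) = F u + F v) \<and>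
           (\<forall>c. \<forall>u\<in>B. F (c *\<^sub>R u) = c * F u) \<and> (\<forall>u\<in>B. F u \<le> p u)"
proof -
  define graph_f where "graph_f = (\<lambda>u. (u, f u)) ` V"
  define A where "A = {G. dominated_linear_graph B p G \<and> graph_f \<subseteq> G}"
  have graph_f: "graph_f \<in> A"
    unfolding A_def graph_f_def using V f_add f_scaleR f_le
    by (auto intro!: dominated_linear_graphI subspace_add subspace_scale)
  have chain_bounded: "\<exists>U\<in>A. \<forall>G\<in>C. G \<subseteq> U" if C: "subset.chain A C" for C
  proof (cases "C = {}")
    case True
    then show ?thesis using graph_f by blast
  next
    case False
    have dlg: "dominated_linear_graph B p (\<Union>C)"
      by (rule dominated_linear_graph_Union) (use C in \<open>auto simp: A_def subset.chain_def\<close>)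
    obtain G0 where "G0 \<in> C" using False by blast
    then have "G0 \<in> A" using C by (auto simp: subset.chain_def)
    then have "graph_f \<subseteq> \<Union>C" using \<open>G0 \<in> C\<close> unfolding A_def by blast
    with dlg have "\<Union>C \<in> A" by (simp add: A_def)
    then show ?thesis by blast
  qed
  obtain G where G: "G \<in> A" and G_max: "\<And>G'. G' \<in> A \<Longrightarrow> G \<subseteq> G' \<Longrightarrow> G' = G"
    using subset_Zorn[OF chain_bounded] by auto
  have G_dlg: "dominated_linear_graph B p G" and fG: "graph_f \<subseteq> G" using G by (auto simp: A_def)
  have "u \<in> Domain G" if u: "u \<in> B" for u
  proof (rule ccontr)
    assume "u \<notin> Domain G"
    moreover have "(0, f 0) \<in> G" using fG subspace_0[OF V(1)] by (auto simp: graph_f_def)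
    ultimately obtain G' where G': "dominated_linear_graph B p G'" "G \<subseteq> G'" "u \<in> Domain G'"
      using dominated_linear_graph_extend[OF B p_add p_scaleR G_dlg _ u] by (metis empty_iff)
    then have "G' = G" using fG by (intro G_max) (auto simp: A_def)
    with G' \<open>u \<notin> Domain G\<close> show False by simp
  qed
  note G_total = this
  have F_eq: "(THE y. (u, y) \<in> G) = y" if "(u, y) \<in> G" for u y
    using that by (intro the_equality) (auto intro: dominated_linear_graph_unique[OF G_dlg])
  have graph_F: "(u, THE y. (u, y) \<in> G) \<in> G" if u: "u \<in> B" for u
  proof -
    obtain y where "(u, y) \<in> G" using G_total[OF u] by blast
    then show ?thesis by (simp add: F_eq)
  qed
  show ?thesis
  proof (intro exI[of _ "\<lambda>u. THE y. (u, y) \<in> G"] conjI ballI allI)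
    fix u assume "u \<in> V"
    then show "(THE y. (u, y) \<in> G) = f u" using fG by (intro F_eq) (auto simp: graph_f_def)
  next
    fix u v assume "u \<in> B" "v \<in> B"
    then show "(THE y. (u + v, y) \<in> G) = (THE y. (u, y) \<in> G) + (THE y. (v, y) \<in> G)"
      by (intro F_eq dominated_linear_graph_add[OF G_dlg] graph_F)
  next
    fix c u assume "u \<in> B"
    then show "(THE y. (c *\<^sub>R u, y) \<in> G) = c * (THE y. (u, y) \<in> G)"
      by (intro F_eq dominated_linear_graph_scaleR[OF G_dlg] graph_F)
  next
    fix u assume "u \<in> B"
    then show "(THE y. (u, y) \<in> G) \<le> p u" by (rule dominated_linear_graph_le[OF G_dlg graph_F])
  qed
qed

text \<open>E induces a functional on the image of T, since domination forces E g = 0 whenever T g = 0.\<close>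
corollary hahn_banach_dominated_extension_linear_image:
  fixes E :: "'u::real_vector \<Rightarrow> real" and p :: "'v::real_vector \<Rightarrow> real"
  assumes B: "subspace B" and G: "subspace G" and T: "linear T" "T ` G \<subseteq> B"
    and E_add: "\<And>g h. g \<in> G \<Longrightarrow> h \<in> G \<Longrightarrow> E (g + h) = E g + E h"
    and E_scaleR: "\<And>c g. g \<in> G \<Longrightarrow> E (c *\<^sub>R g) = c * E g"
    and p_add: "\<And>u v. u \<in> B \<Longrightarrow> v \<in> B \<Longrightarrow> p (u + v) \<le> p u + p v"
    and p_scaleR: "\<And>c u. u \<in> B \<Longrightarrow> c > 0 \<Longrightarrow> p (c *\<^sub>R u) = c * p u"
    and E_le: "\<And>g. g \<in> G \<Longrightarrow> E g \<le> p (T g)"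
  shows "\<exists>F. (\<forall>g\<in>G. F (T g) = E g) \<and> (\<forall>u\<in>B. \<forall>v\<in>B. F (u + v) = F u + F v) \<and>
           (\<forall>c. \<forall>u\<in>B. F (c *\<^sub>R u) = c * F u) \<and> (\<forall>u\<in>B. F u \<le> p u)"
proof -
  have p0: "p 0 = 0" using p_scaleR[of 0 2] B by (simp add: subspace_0)
  have E_diff: "E (g - h) = E g - E h" if "g \<in> G" "h \<in> G" for g h
    using E_add[of g "- h"] E_scaleR[of h "-1"] that G by (simp add: subspace_neg)
  have E_cong: "E g = E h" if "g \<in> G" "h \<in> G" "T g = T h" for g h
  proof -
    have "T (g - h) = 0" "T (h - g) = 0" using that(3) by (simp_all add: linear_diff[OF T(1)])
    moreover have "g - h \<in> G" "h - g \<in> G" using that(1,2) G by (simp_all add: subspace_diff)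
    ultimately have "E (g - h) \<le> 0" "E (h - g) \<le> 0" using E_le p0 by metis+
    then show ?thesis using E_diff that(1,2) by fastforce
  qed
  define f where "f u = E (SOME g. g \<in> G \<and> u = T g)" for u
  have f_T: "f (T g) = E g" if g: "g \<in> G" for g
  proof -
    define g' where "g' = (SOME g'. g' \<in> G \<and> T g = T g')"
    have "g' \<in> G \<and> T g = T g'" unfolding g'_def by (rule someI[of _ g]) (simp add: g)
    then show ?thesis unfolding f_def g'_def[symmetric] using E_cong[OF g] by metis
  qed
  have "\<exists>F. (\<forall>u\<in>T ` G. F u = f u) \<and> (\<forall>u\<in>B. \<forall>v\<in>B. F (u + v) = F u + F v) \<and>
           (\<forall>c. \<forall>u\<in>B. F (c *\<^sub>R u) = c * F u) \<and> (\<forall>u\<in>B. F u \<le> p u)"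
  proof (rule hahn_banach_dominated_extension[OF B _ T(2) _ _ p_add p_scaleR])
    show "subspace (T ` G)" by (rule linear_subspace_image[OF T(1) G])
    show "f (u + v) = f u + f v" if uv: "u \<in> T ` G" "v \<in> T ` G" for u v
    proof -
      obtain g h where gh: "g \<in> G" "h \<in> G" "u = T g" "v = T h" using uv by blast
      then have "u + v = T (g + h)" by (simp add: linear_add[OF T(1)])
      then show ?thesis using gh G by (simp add: f_T E_add subspace_add)
    qed
    show "f (c *\<^sub>R u) = c * f u" if u: "u \<in> T ` G" for c u
    proof -
      obtain g where g: "g \<in> G" "u = T g" using u by blast
      then have "c *\<^sub>R u = T (c *\<^sub>R g)" by (simp add: linear_scale[OF T(1)])
      then show ?thesis using g G by (simp add: f_T E_scaleR subspace_scale)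
    qed
    show "f u \<le> p u" if "u \<in> T ` G" for u
      using that E_le f_T by auto
  qed
  then show ?thesis using f_T by auto
qed

section \<open>Bounded measurable functions\<close>

definition bounded_measurable :: "'a measure \<Rightarrow> ('a \<Rightarrow> real) set" where
  "bounded_measurable M = {h \<in> borel_measurable M. bounded (h ` space M)}"

definition sup_norm :: "'a measure \<Rightarrow> ('a \<Rightarrow> real) \<Rightarrow> real" where
  "sup_norm M h = (SUP x\<in>space M. \<bar>h x\<bar>)"

lemma bounded_measurable_bound:
  "h \<in> bounded_measurable M \<Longrightarrow> \<exists>B. \<forall>x\<in>space M. \<bar>h x\<bar> \<le> B"
  by (auto simp: bounded_measurable_def bounded_iff)

lemma bounded_measurableI:
  "h \<in> borel_measurable M \<Longrightarrow> (\<And>x. x \<in> space M \<Longrightarrow> \<bar>h x\<bar> \<le> B) \<Longrightarrow> h \<in> bounded_measurable M"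
  by (auto simp: bounded_measurable_def bounded_iff)

lemma bounded_measurable_const: "(\<lambda>_. c) \<in> bounded_measurable M"
  by (rule bounded_measurableI[of _ _ "\<bar>c\<bar>"]) auto

lemma bounded_measurable_indicator: "A \<in> sets M \<Longrightarrow> indicator A \<in> bounded_measurable M"
  by (rule bounded_measurableI[of _ _ 1]) (auto simp: indicator_def)

lemma subspace_bounded_measurable: "subspace (bounded_measurable M)"
proof (rule subspaceI)
  show "0 \<in> bounded_measurable M"
    using bounded_measurable_const[of 0] by (simp add: zero_fun_def)
next
  fix u v assume uv: "u \<in> bounded_measurable M" "v \<in> bounded_measurable M"
  obtain a b where "\<forall>x\<in>space M. \<bar>u x\<bar> \<le> a" "\<forall>x\<in>space M. \<bar>v x\<bar> \<le> b"
    using bounded_measurable_bound[OF uv(1)] bounded_measurable_bound[OF uv(2)] by blast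
  then have "\<bar>u x + v x\<bar> \<le> a + b" if "x \<in> space M" for x
    using that by (meson abs_triangle_ineq add_mono order_trans)
  with uv show "u + v \<in> bounded_measurable M"
    by (intro bounded_measurableI[of _ _ "a + b"]) (auto simp: bounded_measurable_def plus_fun_def)
next
  fix c u assume "u \<in> bounded_measurable M"
  moreover from this obtain a where "\<forall>x\<in>space M. \<bar>u x\<bar> \<le> a" by (meson bounded_measurable_bound)
  ultimately show "c *\<^sub>R u \<in> bounded_measurable M"
    by (intro bounded_measurableI[of _ _ "\<bar>c\<bar> * a"])
       (auto simp: bounded_measurable_def scaleR_fun_def abs_mult intro: mult_left_mono)
qed

lemma abs_le_sup_norm: "h \<in> bounded_measurable M \<Longrightarrow> x \<in> space M \<Longrightarrow> \<bar>h x\<bar> \<le> sup_norm M h"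
  unfolding sup_norm_def bounded_measurable_def
  by (rule cSUP_upper) (auto simp: bounded_iff bdd_above_def)

lemma sup_norm_le: "space M \<noteq> {} \<Longrightarrow> (\<And>x. x \<in> space M \<Longrightarrow> \<bar>h x\<bar> \<le> c) \<Longrightarrow> sup_norm M h \<le> c"
  unfolding sup_norm_def by (rule cSUP_least)

lemma sup_norm_add:
  "space M \<noteq> {} \<Longrightarrow> u \<in> bounded_measurable M \<Longrightarrow> v \<in> bounded_measurable M \<Longrightarrow>
    sup_norm M (u + v) \<le> sup_norm M u + sup_norm M v"
  by (rule sup_norm_le)
     (auto intro: order_trans[OF abs_triangle_ineq add_mono[OF abs_le_sup_norm abs_le_sup_norm]])

lemma sup_norm_scaleR:
  assumes "space M \<noteq> {}" "u \<in> bounded_measurable M" "c > 0"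
  shows "sup_norm M (c *\<^sub>R u) = c * sup_norm M u"
proof (rule antisym)
  show "sup_norm M (c *\<^sub>R u) \<le> c * sup_norm M u"
    using assms abs_le_sup_norm[OF assms(2)] by (intro sup_norm_le) (auto simp: abs_mult)
  have "c *\<^sub>R u \<in> bounded_measurable M"
    using assms(2) subspace_bounded_measurable by (rule subspace_scale[rotated])
  then have "sup_norm M u \<le> sup_norm M (c *\<^sub>R u) / c"
    using assms abs_le_sup_norm by (intro sup_norm_le) (force simp: abs_mult field_simps)+
  then show "c * sup_norm M u \<le> sup_norm M (c *\<^sub>R u)"
    using assms(3) by (simp add: field_simps)
qed

lemma bounded_measurable_integrable:
  assumes "finite_measure M" "h \<in> bounded_measurable M"
  shows "integrable M h"
proof -
  interpret finite_measure M by fact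
  obtain B where "\<forall>x\<in>space M. \<bar>h x\<bar> \<le> B" using bounded_measurable_bound[OF assms(2)] by blast
  then show ?thesis
    using assms(2) by (intro integrable_const_bound[where B=B]) (auto simp: bounded_measurable_def)
qed

lemma abs_integral_le_prob:
  fixes h :: "'a \<Rightarrow> real"
  assumes "prob_space M" "h \<in> borel_measurable M" "\<And>x. x \<in> space M \<Longrightarrow> \<bar>h x\<bar> \<le> c"
  shows "\<bar>integral\<^sup>L M h\<bar> \<le> c"
proof -
  interpret prob_space M by fact
  have "h \<in> bounded_measurable M" using assms(2,3) by (rule bounded_measurableI)
  then have "integrable M h" by (rule bounded_measurable_integrable[OF finite_measure_axioms])
  then have "integral\<^sup>L M h \<le> c" "integral\<^sup>L M (\<lambda>x. - h x) \<le> c"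
    using assms(3) by (intro integral_le_const; force simp: abs_le_iff)+
  then show ?thesis by (simp add: abs_le_iff)
qed

section \<open>Coordinate selections and the operator U\<close>

text \<open>reindex m \<sigma> x is the paper's x_\<sigma> = (x (\<sigma> 0), ..., x (\<sigma> (m - 1))), restricted to {..<m}
  so that it lies in space (SB m).\<close>
definition reindex :: "nat \<Rightarrow> (nat \<Rightarrow> nat) \<Rightarrow> (nat \<Rightarrow> 'a) \<Rightarrow> nat \<Rightarrow> 'a" where
  "reindex m \<sigma> y = (\<lambda>i\<in>{..<m}. y (\<sigma> i))"

lemma space_Sn: "space (Sn k B) = {..<k} \<rightarrow>\<^sub>E space B"
  by (simp add: Sn_def space_PiM)

lemma reindex_in_space: "reindex m \<sigma> y \<in> space (SB m)"
  by (simp add: space_Sn reindex_def)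

lemma measurable_reindex:
  assumes "\<And>i. i < m \<Longrightarrow> \<sigma> i < k"
  shows "reindex m \<sigma> \<in> measurable (SB k) (SB m)"
  unfolding reindex_def Sn_def
  by (intro measurable_restrict measurable_component_singleton) (use assms in auto)

lemma reindex_reindex:
  assumes "\<And>i. i < m \<Longrightarrow> \<sigma> i < k"
  shows "reindex m \<sigma> (reindex k \<pi> y) = reindex m (\<pi> \<circ> \<sigma>) y"
  using assms by (auto simp: reindex_def fun_eq_iff)

lemma permutes_lessThan_less: "\<pi> permutes {..<N} \<Longrightarrow> i < N \<Longrightarrow> \<pi> i < N"
  using permutes_in_image by fastforce

lemma injs_less: "\<sigma> \<in> injs n N \<Longrightarrow> i < n \<Longrightarrow> \<sigma> i < N"
  by (auto simp: injs_def)

lemma finite_injs: "finite (injs n N)"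
  by (rule finite_subset[of _ "{..<n} \<rightarrow>\<^sub>E {..<N}"]) (auto simp: injs_def intro: finite_PiE)

lemma ffact_eq_card_injs: "ffact N n = real (card (injs n N))"
proof -
  have "injs n N = {f \<in> {..<n} \<rightarrow>\<^sub>E {..<N}. inj_on f {..<n}}" by (auto simp: injs_def)
  then have "card (injs n N) = (\<Prod>i<n. N - i)"
    using card_inj_on_subset_funcset[of "{..<n}" "{..<N}" "{..<n}"] by (simp add: atLeast0LessThan)
  then show ?thesis by (simp add: ffact_def)
qed

lemma ffact_pos: "n \<le> N \<Longrightarrow> ffact N n > 0"
  unfolding ffact_def by (intro prod_pos) auto

lemma injs_extend_permutation:
  assumes \<sigma>: "\<sigma> \<in> injs n N" and nN: "n \<le> N"
  obtains \<pi> where "\<pi> permutes {..<N}" "\<And>i. i < n \<Longrightarrow> \<pi> i = \<sigma> i"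
proof -
  have inj: "inj_on \<sigma> {..<n}" and range: "\<sigma> ` {..<n} \<subseteq> {..<N}" using \<sigma> by (auto simp: injs_def)
  define A where "A = {..<N} - {..<n}"
  define B where "B = {..<N} - \<sigma> ` {..<n}"
  have "card A = card B"
    using nN card_Diff_subset[OF finite_imageI range] card_image[OF inj]
    by (simp add: A_def B_def card_Diff_subset)
  then obtain h where h: "bij_betw h A B"
    using finite_same_card_bij[of A B] by (auto simp: A_def B_def)
  have "bij_betw (\<lambda>x. if x \<in> {..<n} then \<sigma> x else h x) ({..<n} \<union> A) (\<sigma> ` {..<n} \<union> B)"
    by (rule bij_betw_disjoint_Un[OF inj_on_imp_bij_betw[OF inj] h]) (auto simp: A_def B_def)
  moreover have "{..<n} \<union> A = {..<N}" "\<sigma> ` {..<n} \<union> B = {..<N}"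
    using nN range by (auto simp: A_def B_def)
  ultimately have bij: "bij_betw (\<lambda>x. if x \<in> {..<n} then \<sigma> x else h x) {..<N} {..<N}" by simp
  define \<pi> where "\<pi> x = (if x \<in> {..<n} then \<sigma> x else if x < N then h x else x)" for x
  have "bij_betw \<pi> {..<N} {..<N}"
    by (rule bij_betw_cong[THEN iffD1, OF _ bij]) (auto simp: \<pi>_def)
  then have "\<pi> permutes {..<N}" by (rule bij_imp_permutes) (use nN in \<open>auto simp: \<pi>_def\<close>)
  then show ?thesis by (rule that) (simp add: \<pi>_def)
qed

lemma reindex_injs_factor:
  assumes "\<sigma> \<in> injs n N" "n \<le> N"
  obtains \<pi> where "\<pi> permutes {..<N}" "\<And>y :: nat \<Rightarrow> 'a. reindex n \<sigma> y = reindex n id (reindex N \<pi> y)"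
proof -
  obtain \<pi> where \<pi>: "\<pi> permutes {..<N}" "\<And>i. i < n \<Longrightarrow> \<pi> i = \<sigma> i"
    using injs_extend_permutation[OF assms] by blast
  have "reindex n \<sigma> y = reindex n id (reindex N \<pi> y)" for y :: "nat \<Rightarrow> 'a"
    using \<pi>(2) assms(2) by (auto simp: reindex_def fun_eq_iff)
  with \<pi>(1) show ?thesis by (rule that)
qed

lemma U_op_reindex: "U_op N n g x = (1 / ffact N n) * (\<Sum>\<sigma>\<in>injs n N. g (reindex n \<sigma> x))"
  by (simp add: U_op_def reindex_def)

lemma U_op_reindex_permutes:
  assumes \<pi>: "\<pi> permutes {..<N}"
  shows "U_op N n g (reindex N \<pi> x) = U_op N n g x"
proof -
  let ?compose = "\<lambda>\<pi> \<sigma>. restrict (\<pi> \<circ> \<sigma>) {..<n}"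
  have compose_injs: "?compose \<rho> \<sigma> \<in> injs n N" if "\<rho> permutes {..<N}" "\<sigma> \<in> injs n N" for \<rho> \<sigma>
    using that permutes_in_image[OF that(1)] permutes_inj[OF that(1)]
    by (auto simp: injs_def inj_on_def inj_def)
  have "bij_betw (?compose \<pi>) (injs n N) (injs n N)"
  proof (rule bij_betw_byWitness[where f' = "?compose (inv \<pi>)"])
    show "\<forall>\<sigma>\<in>injs n N. ?compose (inv \<pi>) (?compose \<pi> \<sigma>) = \<sigma>"
         "\<forall>\<sigma>\<in>injs n N. ?compose \<pi> (?compose (inv \<pi>) \<sigma>) = \<sigma>"
      using permutes_inverses[OF \<pi>] by (auto simp: injs_def fun_eq_iff PiE_def extensional_def)
  qed (use compose_injs \<pi> permutes_inv[OF \<pi>] in auto)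
  then have "(\<Sum>\<sigma>\<in>injs n N. g (reindex n (?compose \<pi> \<sigma>) x)) = (\<Sum>\<sigma>\<in>injs n N. g (reindex n \<sigma> x))"
    by (rule sum.reindex_bij_betw)
  moreover have "reindex n \<sigma> (reindex N \<pi> x) = reindex n (?compose \<pi> \<sigma>) x" if "\<sigma> \<in> injs n N" for \<sigma>
    using that by (auto simp: reindex_def fun_eq_iff injs_less)
  ultimately show ?thesis by (simp add: U_op_reindex)
qed

lemma linear_U_op: "linear (U_op N n)"
  by (rule linearI) (simp_all add: U_op_def fun_eq_iff sum.distrib sum_distrib_left algebra_simps)

lemma U_op_const: "n \<le> N \<Longrightarrow> U_op N n (\<lambda>_. c) = (\<lambda>_. c)"
  using ffact_pos[of n N] by (simp add: U_op_def ffact_eq_card_injs fun_eq_iff)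

lemma abs_U_op_le:
  assumes "\<And>z. z \<in> space (SB n) \<Longrightarrow> \<bar>g z\<bar> \<le> B" "n \<le> N"
  shows "\<bar>U_op N n g x\<bar> \<le> B"
proof -
  have "\<bar>\<Sum>\<sigma>\<in>injs n N. g (reindex n \<sigma> x)\<bar> \<le> (\<Sum>\<sigma>\<in>injs n N. B)"
    by (rule order_trans[OF sum_abs sum_mono]) (use assms(1) reindex_in_space in auto)
  then show ?thesis using ffact_pos[OF assms(2)]
    by (simp add: U_op_reindex ffact_eq_card_injs abs_mult field_simps)
qed

lemma U_op_measurable:
  "g \<in> borel_measurable (SB n) \<Longrightarrow> U_op N n g \<in> borel_measurable (SB N)"
  unfolding U_op_reindex[abs_def]
  by (intro borel_measurable_times borel_measurable_const borel_measurable_sum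
        measurable_compose[OF measurable_reindex]) (auto dest: injs_less)

lemma bounded_measurable_reindex:
  assumes "g \<in> bounded_measurable (SB m)" "\<And>i. i < m \<Longrightarrow> \<sigma> i < k"
  shows "(\<lambda>y. g (reindex m \<sigma> y)) \<in> bounded_measurable (SB k)"
proof -
  obtain B where "\<forall>z\<in>space (SB m). \<bar>g z\<bar> \<le> B" using bounded_measurable_bound[OF assms(1)] by blast
  then have "\<bar>g (reindex m \<sigma> y)\<bar> \<le> B" for y using reindex_in_space by blast
  then show ?thesis
    using assms
    by (intro bounded_measurableI[where B=B] measurable_compose[OF measurable_reindex])
       (auto simp: bounded_measurable_def)
qed

lemma U_op_bounded_measurable:
  assumes "g \<in> bounded_measurable (SB n)" "n \<le> N"
  shows "U_op N n g \<in> bounded_measurable (SB N)"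
proof -
  obtain B where "\<forall>z\<in>space (SB n). \<bar>g z\<bar> \<le> B" using bounded_measurable_bound[OF assms(1)] by blast
  then show ?thesis
    using assms by (intro bounded_measurableI[where B=B] U_op_measurable abs_U_op_le)
      (auto simp: bounded_measurable_def)
qed

section \<open>Extendibility bounds the extension functional\<close>

lemma integral_U_op_exchangeable:
  fixes g :: "(nat \<Rightarrow> 'a::topological_space) \<Rightarrow> real"
  assumes nN: "n \<le> N" and Q: "prob_space Q" "sets Q = sets (SB N)" "exchangeable_law N Q"
    and g: "g \<in> bounded_measurable (SB n)"
  shows "integral\<^sup>L Q (U_op N n g) = integral\<^sup>L Q (\<lambda>y. g (reindex n id y))"
proof -
  note Q_eq = measurable_cong_sets[OF Q(2) refl]
  have g_meas: "g \<in> borel_measurable (SB n)" using g by (simp add: bounded_measurable_def)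
  obtain B where B: "\<And>z. z \<in> space (SB n) \<Longrightarrow> \<bar>g z\<bar> \<le> B" using bounded_measurable_bound[OF g] by blast
  have integrable: "integrable Q (\<lambda>y. g (reindex n \<sigma> y))" if "\<sigma> \<in> injs n N" for \<sigma>
    using that B[OF reindex_in_space] prob_space.finite_measure[OF Q(1)]
    by (intro bounded_measurable_integrable bounded_measurableI[where B=B]
        measurable_compose[OF _ g_meas]) (auto simp: Q_eq intro!: measurable_reindex dest: injs_less)
  have each: "integral\<^sup>L Q (\<lambda>y. g (reindex n \<sigma> y)) = integral\<^sup>L Q (\<lambda>y. g (reindex n id y))"
    if \<sigma>: "\<sigma> \<in> injs n N" for \<sigma>
  proof -
    obtain \<pi> where \<pi>: "\<pi> permutes {..<N}"
      "\<And>y :: nat \<Rightarrow> 'a. reindex n \<sigma> y = reindex n id (reindex N \<pi> y)"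
      using reindex_injs_factor[OF \<sigma> nN] by blast
    have invariant: "distr Q (SB N) (reindex N \<pi>) = Q"
      using Q(3) \<pi>(1) unfolding exchangeable_law_def reindex_def by auto
    have "integral\<^sup>L Q (\<lambda>y. g (reindex n \<sigma> y)) = integral\<^sup>L Q (\<lambda>y. g (reindex n id (reindex N \<pi> y)))"
      by (simp only: \<pi>(2))
    also have "\<dots> = integral\<^sup>L (distr Q (SB N) (reindex N \<pi>)) (\<lambda>y. g (reindex n id y))"
      using nN permutes_lessThan_less[OF \<pi>(1)]
      by (intro integral_distr[symmetric] measurable_compose[OF measurable_reindex g_meas])
         (auto simp: Q_eq intro!: measurable_reindex)
    finally show ?thesis by (simp add: invariant)
  qed
  have "integral\<^sup>L Q (U_op N n g) = (1 / ffact N n) * (\<Sum>\<sigma>\<in>injs n N. integral\<^sup>L Q (\<lambda>y. g (reindex n \<sigma> y)))"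
    unfolding U_op_reindex by (simp add: Bochner_Integration.integral_sum[OF integrable])
  also have "\<dots> = integral\<^sup>L Q (\<lambda>y. g (reindex n id y))"
    using each ffact_pos[OF nN] by (simp add: ffact_eq_card_injs)
  finally show ?thesis .
qed

lemma extendible_imp_abs_integral_le_1:
  assumes ext: "extendible M n N X" and M: "prob_space M" and X: "X \<in> measurable M (SB n)"
    and nN: "n \<le> N" and g: "g \<in> bounded_measurable (SB n)"
    and U_le: "\<forall>x\<in>space (SB N). \<bar>U_op N n g x\<bar> \<le> 1"
  shows "\<bar>integral\<^sup>L M (\<lambda>w. g (X w))\<bar> \<le> 1"
proof -
  obtain Q where Q: "prob_space Q" "sets Q = sets (SB N)" "exchangeable_law N Q"
    and marginal: "distr Q (SB n) (reindex n id) = distr M (SB n) X"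
    using ext unfolding extendible_def reindex_def id_def by blast
  note Q_eq = measurable_cong_sets[OF Q(2) refl]
  have g_meas: "g \<in> borel_measurable (SB n)" using g by (simp add: bounded_measurable_def)
  have "integral\<^sup>L M (\<lambda>w. g (X w)) = integral\<^sup>L (distr Q (SB n) (reindex n id)) g"
    by (simp add: marginal integral_distr[OF X g_meas])
  also have "\<dots> = integral\<^sup>L Q (\<lambda>y. g (reindex n id y))"
    using nN by (intro integral_distr g_meas) (auto simp: Q_eq intro!: measurable_reindex)
  also have "\<dots> = integral\<^sup>L Q (U_op N n g)"
    by (rule integral_U_op_exchangeable[symmetric, OF nN Q g])
  finally show ?thesis
    using U_le g_meas sets_eq_imp_space_eq[OF Q(2)]
    by (auto intro!: abs_integral_le_prob[OF Q(1)] U_op_measurable simp: Q_eq)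
qed

lemma ext_norm_eq_1_iff:
  assumes M: "prob_space M" and nN: "n \<le> N"
  shows "ext_norm M n N X = 1 \<longleftrightarrow>
    (\<forall>g\<in>bounded_measurable (SB n). (\<forall>x\<in>space (SB N). \<bar>U_op N n g x\<bar> \<le> 1) \<longrightarrow>
       \<bar>integral\<^sup>L M (\<lambda>w. g (X w))\<bar> \<le> 1)"
proof -
  have "1 \<le> ext_norm M n N X"
    unfolding ext_norm_def
    using bounded_measurable_const[of 1 "SB n"]
    by (intro SUP_upper2[of "\<lambda>_. 1"])
       (auto simp: U_op_const[OF nN] prob_space.prob_space[OF M] bounded_measurable_def)
  moreover have "ext_norm M n N X \<le> 1 \<longleftrightarrow>
    (\<forall>g\<in>bounded_measurable (SB n). (\<forall>x\<in>space (SB N). \<bar>U_op N n g x\<bar> \<le> 1) \<longrightarrow>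
       \<bar>integral\<^sup>L M (\<lambda>w. g (X w))\<bar> \<le> 1)"
    unfolding ext_norm_def bounded_measurable_def by (auto simp: SUP_le_iff)
  ultimately show ?thesis by auto
qed

section \<open>Inner compact approximation and the ring of Borel boxes\<close>

lemma tight_outer_regular_inner_compact:
  fixes P :: "'a::topological_space measure"
  assumes P: "prob_space P" "sets P = sets borel"
    and reg: "outer_regular P" "tight_measure P"
    and A: "A \<in> sets borel" and e: "e > 0"
  obtains K where "compact K" "K \<subseteq> A" "measure P (A - K) \<le> e"
proof -
  interpret prob_space P by fact
  have space_P: "space P = UNIV" using sets_eq_imp_space_eq[OF P(2)] by simp
  define C where "C = UNIV - A"
  have C: "C \<in> sets P" using A P(2) by (auto simp: C_def)
  have "emeasure P C = (INF V \<in> {V. open V \<and> C \<subseteq> V}. emeasure P V)"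
    using reg(1) C unfolding outer_regular_def by blast
  moreover have "emeasure P C < emeasure P C + ennreal (e / 2)"
    using e by (simp add: emeasure_eq_measure ennreal_plus[symmetric] ennreal_less_iff del: ennreal_plus)
  ultimately obtain V where V: "open V" "C \<subseteq> V" "emeasure P V < emeasure P C + ennreal (e / 2)"
    by (metis (no_types, lifting) INF_less_iff mem_Collect_eq)
  have V_sets: "V \<in> sets P" using V(1) P(2) by auto
  have "measure P V < measure P C + e / 2"
    using V(3) e by (simp add: emeasure_eq_measure ennreal_plus[symmetric] ennreal_less_iff del: ennreal_plus)
  then have V_small: "measure P (V - C) \<le> e / 2"
    using finite_measure_Diff[OF V_sets C V(2)] by simp
  obtain K0 where K0: "compact K0" "K0 \<in> sets P" "measure P K0 \<ge> 1 - e / 2"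
    using reg(2) e unfolding tight_measure_def by (metis half_gt_zero)
  have "(space P - K0) \<union> (V - C) \<in> sets P" using K0(2) V_sets C by auto
  moreover have "A - (K0 - V) \<subseteq> (space P - K0) \<union> (V - C)" by (auto simp: C_def space_P)
  ultimately have "measure P (A - (K0 - V)) \<le> measure P ((space P - K0) \<union> (V - C))"
    by (intro finite_measure_mono)
  also have "\<dots> \<le> measure P (space P - K0) + measure P (V - C)"
    using K0 V_sets C by (intro measure_Un_le) auto
  also have "measure P (space P - K0) = 1 - measure P K0" using prob_compl[OF K0(2)] by simp
  finally have "measure P (A - (K0 - V)) \<le> e" using K0(3) V_small by simp
  moreover have "K0 - V \<subseteq> A" using V(2) by (auto simp: C_def)
  ultimately show ?thesis using compact_diff[OF K0(1) V(1)] by (intro that)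
qed

lemma ring_of_sets_finite_Unions:
  assumes C: "C \<subseteq> Pow \<Omega>"
    and Int: "\<And>a b. a \<in> C \<Longrightarrow> b \<in> C \<Longrightarrow> a \<inter> b \<in> C"
    and Diff: "\<And>a b. a \<in> C \<Longrightarrow> b \<in> C \<Longrightarrow> \<exists>F. finite F \<and> F \<subseteq> C \<and> a - b = \<Union>F"
  shows "ring_of_sets \<Omega> {\<Union>F | F. finite F \<and> F \<subseteq> C}" (is "ring_of_sets \<Omega> ?R")
proof -
  have Un: "A \<union> B \<in> ?R" if AB: "A \<in> ?R" "B \<in> ?R" for A B
  proof -
    obtain F G where "finite F" "F \<subseteq> C" "A = \<Union>F" "finite G" "G \<subseteq> C" "B = \<Union>G"
      using AB by blast
    then show ?thesis by (intro CollectI exI[of _ "F \<union> G"]) auto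
  qed
  have Int_R: "A \<inter> B \<in> ?R" if AB: "A \<in> ?R" "B \<in> ?R" for A B
  proof -
    obtain F G where FG: "finite F" "F \<subseteq> C" "A = \<Union>F" "finite G" "G \<subseteq> C" "B = \<Union>G"
      using AB by blast
    then have "A \<inter> B = \<Union>((\<lambda>(f, g). f \<inter> g) ` (F \<times> G))" by auto
    with FG Int show ?thesis by (intro CollectI exI[of _ "(\<lambda>(f, g). f \<inter> g) ` (F \<times> G)"]) auto
  qed
  have Diff_R: "a - \<Union>G \<in> ?R" if "finite G" "G \<subseteq> C" "a \<in> C" for a G
    using that
  proof (induction G rule: finite_induct)
    case empty
    then show ?case by (intro CollectI exI[of _ "{a}"]) auto
  next
    case (insert g G)
    have "a - g \<in> ?R" using Diff[of a g] insert.prems by auto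
    then have "(a - g) \<inter> (a - \<Union>G) \<in> ?R" using insert by (intro Int_R) auto
    moreover have "a - \<Union>(insert g G) = (a - g) \<inter> (a - \<Union>G)" by auto
    ultimately show ?case by simp
  qed
  show ?thesis
  proof (rule ring_of_setsI)
    show "?R \<subseteq> Pow \<Omega>" using C by blast
    show "{} \<in> ?R" by (intro CollectI exI[of _ "{}"]) auto
  next
    fix A B assume "A \<in> ?R" "B \<in> ?R"
    then show "A \<union> B \<in> ?R" by (rule Un)
  next
    fix A B assume "A \<in> ?R" "B \<in> ?R"
    then obtain F G where FG: "finite F" "F \<subseteq> C" "A = \<Union>F" "finite G" "G \<subseteq> C" "B = \<Union>G"
      by blast
    have "\<Union>F - \<Union>G \<in> ?R" using FG(1,2)
    proof (induction F rule: finite_induct)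
      case empty
      then show ?case by (intro CollectI exI[of _ "{}"]) auto
    next
      case (insert f F)
      have "(f - \<Union>G) \<union> (\<Union>F - \<Union>G) \<in> ?R"
        using insert Diff_R[OF FG(4,5)] by (intro Un) auto
      moreover have "\<Union>(insert f F) - \<Union>G = (f - \<Union>G) \<union> (\<Union>F - \<Union>G)" by auto
      ultimately show ?case by simp
    qed
    then show "A - B \<in> ?R" using FG by simp
  qed
qed

definition borel_boxes :: "nat \<Rightarrow> (nat \<Rightarrow> 'a::topological_space) set set" where
  "borel_boxes N = {PiE {..<N} A | A. \<forall>i<N. A i \<in> sets borel}"

definition box_ring :: "nat \<Rightarrow> (nat \<Rightarrow> 'a::topological_space) set set" where
  "box_ring N = {\<Union>F | F. finite F \<and> F \<subseteq> borel_boxes N}"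

lemma borel_boxes_eq_prod_algebra: "borel_boxes N = prod_algebra {..<N} (\<lambda>_. borel)"
  unfolding prod_algebra_eq_finite[OF finite_lessThan] borel_boxes_def by (auto simp: Pi_iff)

lemma sets_SB_eq_sigma_borel_boxes: "sets (SB N) = sigma_sets (space (SB N)) (borel_boxes N)"
  by (simp add: Sn_def sets_PiM space_PiM borel_boxes_eq_prod_algebra)

lemma borel_boxes_sets: "borel_boxes N \<subseteq> sets (SB N)"
  unfolding borel_boxes_def Sn_def by (auto intro!: sets_PiM_I_finite)

lemma space_in_borel_boxes: "space (SB N) \<in> borel_boxes N"
  unfolding borel_boxes_def space_Sn by auto

lemma borel_boxes_Int:
  assumes "r \<in> borel_boxes N" "s \<in> borel_boxes N"
  shows "r \<inter> s \<in> borel_boxes N"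
proof -
  obtain A B where "r = PiE {..<N} A" "\<forall>i<N. A i \<in> sets borel"
    "s = PiE {..<N} B" "\<forall>i<N. B i \<in> sets borel"
    using assms unfolding borel_boxes_def by blast
  then show ?thesis unfolding borel_boxes_def
    by (intro CollectI exI[of _ "\<lambda>i. A i \<inter> B i"]) (auto simp: PiE_Int)
qed

text \<open>The complement of one box inside another is covered by the N boxes that violate
  the constraint in a single coordinate.\<close>
lemma borel_boxes_Diff:
  assumes "r \<in> borel_boxes N" "s \<in> borel_boxes N"
  shows "\<exists>F. finite F \<and> F \<subseteq> borel_boxes N \<and> r - s = \<Union>F"
proof -
  obtain A B where AB: "r = PiE {..<N} A" "\<forall>i<N. A i \<in> sets borel"
    "s = PiE {..<N} B" "\<forall>i<N. B i \<in> sets borel"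
    using assms unfolding borel_boxes_def by blast
  define D where "D j = PiE {..<N} (A(j := A j - B j))" for j
  have "r - s = \<Union>(D ` {..<N})"
  proof
    show "r - s \<subseteq> \<Union>(D ` {..<N})"
    proof
      fix x assume x: "x \<in> r - s"
      then obtain j where "j < N" "x j \<notin> B j" using AB by (auto simp: PiE_iff)
      with x show "x \<in> \<Union>(D ` {..<N})" unfolding AB D_def by (auto simp: PiE_iff)
    qed
    show "\<Union>(D ` {..<N}) \<subseteq> r - s"
    proof
      fix x assume "x \<in> \<Union>(D ` {..<N})"
      then obtain j where j: "j < N" "x \<in> D j" by auto
      then have "x \<in> PiE {..<N} A" "x j \<notin> B j"
        unfolding D_def by (auto simp: PiE_iff split: if_splits)
      then show "x \<in> r - s" using AB j by (auto simp: PiE_iff)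
    qed
  qed
  moreover have "D j \<in> borel_boxes N" if "j < N" for j
    using AB unfolding D_def borel_boxes_def by (intro CollectI exI[of _ "A(j := A j - B j)"]) auto
  ultimately show ?thesis by (intro exI[of _ "D ` {..<N}"]) auto
qed

lemma ring_of_sets_box_ring: "ring_of_sets (space (SB N)) (box_ring N)"
  unfolding box_ring_def
proof (rule ring_of_sets_finite_Unions[OF _ borel_boxes_Int borel_boxes_Diff])
  show "borel_boxes N \<subseteq> Pow (space (SB N))"
    using borel_boxes_sets sets.space_closed[of "SB N"] by blast
qed

lemma box_ring_sets: "box_ring N \<subseteq> sets (SB N)"
  unfolding box_ring_def using borel_boxes_sets by auto

lemma sigma_sets_box_ring: "sigma_sets (space (SB N)) (box_ring N) = sets (SB N)"
proof
  show "sigma_sets (space (SB N)) (box_ring N) \<subseteq> sets (SB N)"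
    by (rule sets.sigma_sets_subset[OF box_ring_sets])
  have "borel_boxes N \<subseteq> box_ring N" unfolding box_ring_def by blast
  then show "sets (SB N) \<subseteq> sigma_sets (space (SB N)) (box_ring N)"
    unfolding sets_SB_eq_sigma_borel_boxes[of N] by (rule sigma_sets_mono')
qed

lemma measurable_coordinate_set: "A \<in> sets borel \<Longrightarrow> i < k \<Longrightarrow> {y \<in> space (SB k). y i \<in> A} \<in> sets (SB k)"
  using measurable_sets[OF measurable_component_singleton[of i "{..<k}" "\<lambda>_. borel"]]
  by (simp add: Sn_def vimage_def Int_def conj_commute)

lemma reindex_id: "reindex n id = (\<lambda>y. \<lambda>i\<in>{..<n}. y i)"
  by (simp add: reindex_def fun_eq_iff)

lemma Hausdorff_space_euclidean_t2: "Hausdorff_space (euclidean :: 'a::t2_space topology)"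
  unfolding Hausdorff_space_def disjnt_def using hausdorff by auto

lemma compactin_Inter_empty_finite:
  fixes K :: "nat \<Rightarrow> 'a set"
  assumes T: "Hausdorff_space T" and K: "\<And>k. compactin T (K k)" and empty: "(\<Inter>k. K k) = {}"
  obtains m where "(\<Inter>k\<le>m. K k) = {}"
proof -
  have closed: "\<forall>C\<in>range K. closedin T C" using compactin_imp_closedin[OF T K] by blast
  have "K 0 \<inter> \<Inter>(range K) = {}" using empty by auto
  then obtain \<F> where \<F>: "finite \<F>" "\<F> \<subseteq> range K" "K 0 \<inter> \<Inter>\<F> = {}"
    using compactin_fip[THEN iffD1, OF K[of 0]] closed by blast
  obtain C where C: "finite C" "\<F> = K ` C" using finite_subset_image[OF \<F>(1,2)] by blast
  obtain m where "C \<subseteq> {..<m}" using finite_nat_bounded[OF C(1)] by blast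
  then have "(\<Inter>k\<le>m. K k) \<subseteq> K 0 \<inter> \<Inter>\<F>" using C(2) by auto
  with \<F>(3) show ?thesis using that by blast
qed

lemma preimage_reindex_permutes_borel_box:
  assumes \<pi>: "\<pi> permutes {..<N}" and r: "r \<in> borel_boxes N"
  shows "{y \<in> space (SB N). reindex N \<pi> y \<in> r} \<in> borel_boxes N"
proof -
  obtain B where B: "r = PiE {..<N} B" "\<forall>i<N. B i \<in> sets borel" using r unfolding borel_boxes_def by blast
  have inv_less: "\<And>j. j < N \<Longrightarrow> inv \<pi> j < N" by (rule permutes_lessThan_less[OF permutes_inv[OF \<pi>]])
  have "{y \<in> space (SB N). reindex N \<pi> y \<in> r} = PiE {..<N} (\<lambda>j. B (inv \<pi> j))"
  proof (rule set_eqI)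
    fix y :: "nat \<Rightarrow> 'a"
    have "(\<forall>i<N. y (\<pi> i) \<in> B i) \<longleftrightarrow> (\<forall>j<N. y j \<in> B (inv \<pi> j))"
      using inv_less permutes_lessThan_less[OF \<pi>] permutes_inverses[OF \<pi>] by metis
    then show "y \<in> {y \<in> space (SB N). reindex N \<pi> y \<in> r} \<longleftrightarrow> y \<in> PiE {..<N} (\<lambda>j. B (inv \<pi> j))"
      unfolding B(1) by (auto simp: space_Sn PiE_iff reindex_def)
  qed
  then show ?thesis
    unfolding borel_boxes_def using B(2) inv_less by (intro CollectI exI[of _ "\<lambda>j. B (inv \<pi> j)"]) auto
qed

lemma preimage_reindex_id_borel_box:
  assumes "Y \<in> prod_algebra {..<n} (\<lambda>_. borel)" "n \<le> N"
  shows "{y \<in> space (SB N). reindex n id y \<in> Y} \<in> borel_boxes N"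
proof -
  obtain C where C: "Y = PiE {..<n} C" "C \<in> (\<Pi> j\<in>{..<n}. sets borel)"
    using assms(1) unfolding prod_algebra_eq_finite[OF finite_lessThan] by blast
  have "{y \<in> space (SB N). reindex n id y \<in> Y} = PiE {..<N} (\<lambda>i. if i < n then C i else UNIV)"
  proof (rule set_eqI)
    fix y :: "nat \<Rightarrow> 'a"
    have "reindex n id y \<in> Y \<longleftrightarrow> (\<forall>i<n. y i \<in> C i)"
      unfolding C(1) reindex_def by (auto simp: PiE_iff)
    moreover have "y \<in> PiE {..<N} (\<lambda>i. if i < n then C i else UNIV) \<longleftrightarrow>
        y \<in> space (SB N) \<and> (\<forall>i<n. y i \<in> C i)"
      using assms(2) by (auto simp: space_Sn PiE_iff)
    ultimately show "y \<in> {y \<in> space (SB N). reindex n id y \<in> Y} \<longleftrightarrow>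
        y \<in> PiE {..<N} (\<lambda>i. if i < n then C i else UNIV)" by simp
  qed
  then show ?thesis using C(2) unfolding borel_boxes_def by (auto intro!: exI[of _ "\<lambda>i. if i < n then C i else UNIV"])
qed

section \<open>Construction of the extension\<close>

locale extension_construction =
  fixes M :: "'w measure" and X :: "'w \<Rightarrow> nat \<Rightarrow> 'a::t2_space" and n N :: nat
  assumes n_pos: "0 < n" and n_le_N: "n \<le> N"
    and M: "prob_space M" and X: "X \<in> measurable M (SB n)"
    and tight: "tight_measure (distr M borel (\<lambda>w. X w 0))"
    and outer_regular: "outer_regular (distr M borel (\<lambda>w. X w 0))"
    and abs_integral_le: "\<And>g. g \<in> bounded_measurable (SB n) \<Longrightarrow>
      (\<forall>x\<in>space (SB N). \<bar>U_op N n g x\<bar> \<le> 1) \<Longrightarrow> \<bar>integral\<^sup>L M (\<lambda>w. g (X w))\<bar> \<le> 1"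
begin

abbreviation \<Omega> :: "(nat \<Rightarrow> 'a) set" where
  "\<Omega> \<equiv> space (SB N)"

abbreviation B_N :: "((nat \<Rightarrow> 'a) \<Rightarrow> real) set" where
  "B_N \<equiv> bounded_measurable (SB N)"

abbreviation B_n :: "((nat \<Rightarrow> 'a) \<Rightarrow> real) set" where
  "B_n \<equiv> bounded_measurable (SB n)"

abbreviation norm_N :: "((nat \<Rightarrow> 'a) \<Rightarrow> real) \<Rightarrow> real" where
  "norm_N \<equiv> sup_norm (SB N)"

definition E :: "((nat \<Rightarrow> 'a) \<Rightarrow> real) \<Rightarrow> real" where
  "E g = integral\<^sup>L M (\<lambda>w. g (X w))"

lemma \<Omega>_nonempty: "\<Omega> \<noteq> {}"
  by (simp add: space_Sn PiE_eq_empty_iff)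

lemma integrable_E:
  assumes "g \<in> B_n"
  shows "integrable M (\<lambda>w. g (X w))"
proof -
  obtain B where "\<forall>z\<in>space (SB n). \<bar>g z\<bar> \<le> B" using bounded_measurable_bound[OF assms] by blast
  then show ?thesis
    using assms prob_space.finite_measure[OF M] measurable_space[OF X]
    by (intro bounded_measurable_integrable bounded_measurableI[where B=B] measurable_compose[OF X])
       (auto simp: bounded_measurable_def)
qed

lemma E_add: "g \<in> B_n \<Longrightarrow> h \<in> B_n \<Longrightarrow> E (g + h) = E g + E h"
  unfolding E_def by (simp add: integrable_E)

lemma E_scaleR: "E (c *\<^sub>R g) = c * E g"
  unfolding E_def by simp

text \<open>The hypothesis is the case norm_N (U_op N n g) = 1 of this bound; the degenerate case
  U_op N n g = 0 is handled by scaling g up arbitrarily.\<close>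
lemma abs_E_le_norm_U_op:
  assumes g: "g \<in> B_n"
  shows "\<bar>E g\<bar> \<le> norm_N (U_op N n g)"
proof -
  define s where "s = norm_N (U_op N n g)"
  have Ug: "U_op N n g \<in> B_N" by (rule U_op_bounded_measurable[OF g n_le_N])
  have U_le: "\<And>x. x \<in> \<Omega> \<Longrightarrow> \<bar>U_op N n g x\<bar> \<le> s"
    unfolding s_def by (rule abs_le_sup_norm[OF Ug])
  have scaled: "\<bar>t * E g\<bar> \<le> 1" if "\<And>x. x \<in> \<Omega> \<Longrightarrow> \<bar>t * U_op N n g x\<bar> \<le> 1" for t
  proof -
    have "t *\<^sub>R g \<in> B_n" using g subspace_bounded_measurable by (rule subspace_scale[rotated])
    moreover have "U_op N n (t *\<^sub>R g) = t *\<^sub>R U_op N n g" by (rule linear_scale[OF linear_U_op])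
    ultimately show ?thesis using abs_integral_le[of "t *\<^sub>R g"] that by (simp add: E_def[symmetric] E_scaleR)
  qed
  have "0 \<le> s" using U_le \<Omega>_nonempty by fastforce
  show ?thesis
  proof (cases "s = 0")
    case True
    show ?thesis
    proof (rule ccontr)
      assume "\<not> ?thesis"
      then have "E g \<noteq> 0" using True s_def by simp
      moreover have "\<bar>(2 / \<bar>E g\<bar>) * E g\<bar> \<le> 1" by (rule scaled) (use U_le True in auto)
      ultimately show False by (simp add: abs_mult)
    qed
  next
    case False
    with \<open>0 \<le> s\<close> have "s > 0" by simp
    have "\<bar>(1 / s) * E g\<bar> \<le> 1"
      by (rule scaled) (use U_le \<open>s > 0\<close> in \<open>auto simp: abs_mult field_simps\<close>)
    then show ?thesis using \<open>s > 0\<close> s_def by (simp add: abs_mult field_simps)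
  qed
qed

lemma dominated_extension_exists:
  "\<exists>F. (\<forall>g\<in>B_n. F (U_op N n g) = E g) \<and> (\<forall>u\<in>B_N. \<forall>v\<in>B_N. F (u + v) = F u + F v) \<and>
      (\<forall>c. \<forall>u\<in>B_N. F (c *\<^sub>R u) = c * F u) \<and> (\<forall>u\<in>B_N. F u \<le> norm_N u)"
proof (rule hahn_banach_dominated_extension_linear_image[OF subspace_bounded_measurable
      subspace_bounded_measurable linear_U_op])
  show "U_op N n ` B_n \<subseteq> B_N" using U_op_bounded_measurable n_le_N by blast
  show "E g \<le> norm_N (U_op N n g)" if "g \<in> B_n" for g
    using abs_E_le_norm_U_op[OF that] by simp
qed (use E_add E_scaleR sup_norm_add[OF \<Omega>_nonempty] sup_norm_scaleR[OF \<Omega>_nonempty] in auto)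

definition F :: "((nat \<Rightarrow> 'a) \<Rightarrow> real) \<Rightarrow> real" where
  "F = (SOME F. (\<forall>g\<in>B_n. F (U_op N n g) = E g) \<and> (\<forall>u\<in>B_N. \<forall>v\<in>B_N. F (u + v) = F u + F v) \<and>
      (\<forall>c. \<forall>u\<in>B_N. F (c *\<^sub>R u) = c * F u) \<and> (\<forall>u\<in>B_N. F u \<le> norm_N u))"

lemma
  shows F_U_op: "g \<in> B_n \<Longrightarrow> F (U_op N n g) = E g"
    and F_add: "u \<in> B_N \<Longrightarrow> v \<in> B_N \<Longrightarrow> F (u + v) = F u + F v"
    and F_scaleR: "u \<in> B_N \<Longrightarrow> F (c *\<^sub>R u) = c * F u"
    and F_le_norm: "u \<in> B_N \<Longrightarrow> F u \<le> norm_N u"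
  using someI_ex[OF dominated_extension_exists] unfolding F_def[symmetric] by blast+

lemma F_diff:
  assumes u: "u \<in> B_N" and v: "v \<in> B_N"
  shows "F (u - v) = F u - F v"
proof -
  have "- v \<in> B_N" by (rule subspace_neg[OF subspace_bounded_measurable v])
  moreover have "F (- v) = - F v" using F_scaleR[OF v, of "-1"] by simp
  ultimately show ?thesis using F_add[OF u, of "- v"] by simp
qed

lemma F_cong:
  assumes u: "u \<in> B_N" and v: "v \<in> B_N" and eq: "\<And>x. x \<in> \<Omega> \<Longrightarrow> u x = v x"
  shows "F u = F v"
proof -
  have d: "u - v \<in> B_N" "v - u \<in> B_N" using u v subspace_bounded_measurable by (auto intro: subspace_diff)
  have "norm_N (u - v) \<le> 0" "norm_N (v - u) \<le> 0" using eq by (auto intro!: sup_norm_le[OF \<Omega>_nonempty])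
  then have "F (u - v) \<le> 0" "F (v - u) \<le> 0" using F_le_norm[OF d(1)] F_le_norm[OF d(2)] by linarith+
  then show ?thesis using F_diff[OF u v] F_diff[OF v u] by simp
qed

lemma F_const: "F (\<lambda>_. c) = c"
proof -
  have "U_op N n (\<lambda>_. 1) = (\<lambda>_::nat \<Rightarrow> 'a. 1::real)" by (rule U_op_const[OF n_le_N])
  then have "F (\<lambda>_. 1) = E (\<lambda>_. 1)" using F_U_op[OF bounded_measurable_const, of 1] by simp
  then have "F (\<lambda>_. 1) = 1" by (simp add: E_def prob_space.prob_space[OF M])
  then show ?thesis using F_scaleR[OF bounded_measurable_const, of c 1] by (simp add: scaleR_fun_def)
qed

text \<open>Domination applied to the constant norm_N u minus u.\<close>
lemma F_nonneg:
  assumes u: "u \<in> B_N" and nonneg: "\<And>x. x \<in> \<Omega> \<Longrightarrow> 0 \<le> u x"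
  shows "0 \<le> F u"
proof -
  define c where "c = norm_N u"
  have w: "(\<lambda>_. c) - u \<in> B_N" using u bounded_measurable_const subspace_bounded_measurable
    by (auto intro: subspace_diff)
  have "norm_N ((\<lambda>_. c) - u) \<le> c"
    using abs_le_sup_norm[OF u] nonneg unfolding c_def by (intro sup_norm_le[OF \<Omega>_nonempty]) force
  then have "F ((\<lambda>_. c) - u) \<le> c" using F_le_norm[OF w] by simp
  then show ?thesis using F_diff[OF bounded_measurable_const u] F_const by simp
qed

definition Phi :: "((nat \<Rightarrow> 'a) \<Rightarrow> real) \<Rightarrow> real" where
  "Phi h = (\<Sum>\<pi> | \<pi> permutes {..<N}. F (\<lambda>y. h (reindex N \<pi> y))) / fact N"

lemma bounded_measurable_reindex_permutes:
  "h \<in> B_N \<Longrightarrow> \<pi> permutes {..<N} \<Longrightarrow> (\<lambda>y. h (reindex N \<pi> y)) \<in> B_N"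
  by (rule bounded_measurable_reindex) (auto intro: permutes_lessThan_less)

lemma Phi_add: "u \<in> B_N \<Longrightarrow> v \<in> B_N \<Longrightarrow> Phi (u + v) = Phi u + Phi v"
  unfolding Phi_def
  by (simp add: F_add[OF bounded_measurable_reindex_permutes bounded_measurable_reindex_permutes,
        unfolded plus_fun_def] sum.distrib add_divide_distrib plus_fun_def)

lemma Phi_scaleR:
  assumes u: "u \<in> B_N"
  shows "Phi (c *\<^sub>R u) = c * Phi u"
proof -
  have "F (\<lambda>y. (c *\<^sub>R u) (reindex N \<pi> y)) = c * F (\<lambda>y. u (reindex N \<pi> y))"
    if "\<pi> permutes {..<N}" for \<pi>
    using F_scaleR[OF bounded_measurable_reindex_permutes[OF u that], of c] by (simp add: scaleR_fun_def)
  then show ?thesis by (simp add: Phi_def sum_distrib_left)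
qed

lemma Phi_sum: "finite I \<Longrightarrow> (\<And>i. i \<in> I \<Longrightarrow> f i \<in> B_N) \<Longrightarrow> Phi (\<Sum>i\<in>I. f i) = (\<Sum>i\<in>I. Phi (f i))"
proof (induction I rule: finite_induct)
  case empty
  then show ?case using Phi_scaleR[OF bounded_measurable_const, of 0 0] by (simp add: zero_fun_def)
next
  case (insert i I)
  have "(\<Sum>j\<in>I. f j) \<in> B_N" using insert by (intro subspace_sum[OF subspace_bounded_measurable]) auto
  have "Phi (\<Sum>j\<in>insert i I. f j) = Phi (f i + (\<Sum>j\<in>I. f j))"
    by (simp only: sum.insert[OF insert.hyps])
  also have "\<dots> = Phi (f i) + Phi (\<Sum>j\<in>I. f j)"
    using insert \<open>(\<Sum>j\<in>I. f j) \<in> B_N\<close> by (intro Phi_add) auto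
  also have "\<dots> = (\<Sum>j\<in>insert i I. Phi (f j))" using insert by simp
  finally show ?case .
qed

lemma Phi_nonneg: "u \<in> B_N \<Longrightarrow> (\<And>x. x \<in> \<Omega> \<Longrightarrow> 0 \<le> u x) \<Longrightarrow> 0 \<le> Phi u"
  unfolding Phi_def
  by (intro divide_nonneg_pos sum_nonneg F_nonneg bounded_measurable_reindex_permutes)
     (auto simp: reindex_in_space)

lemma Phi_cong: "u \<in> B_N \<Longrightarrow> v \<in> B_N \<Longrightarrow> (\<And>x. x \<in> \<Omega> \<Longrightarrow> u x = v x) \<Longrightarrow> Phi u = Phi v"
  unfolding Phi_def
  by (intro arg_cong[where f="\<lambda>x. x / _"] sum.cong refl F_cong bounded_measurable_reindex_permutes)
     (auto simp: reindex_in_space)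

lemma Phi_const: "Phi (\<lambda>_. c) = c"
  by (simp add: Phi_def F_const card_permutations)

lemma Phi_reindex_permutes:
  assumes \<pi>0: "\<pi>0 permutes {..<N}" and h: "h \<in> B_N"
  shows "Phi (\<lambda>y. h (reindex N \<pi>0 y)) = Phi h"
proof -
  have "reindex N \<pi>0 (reindex N \<pi> y) = reindex N (\<pi> \<circ> \<pi>0) y" for \<pi> and y :: "nat \<Rightarrow> 'a"
    by (rule reindex_reindex) (rule permutes_lessThan_less[OF \<pi>0])
  moreover have "bij_betw (\<lambda>\<pi>. \<pi> \<circ> \<pi>0) {\<pi>. \<pi> permutes {..<N}} {\<pi>. \<pi> permutes {..<N}}"
  proof (rule bij_betw_byWitness[where f'="\<lambda>\<pi>. \<pi> \<circ> inv \<pi>0"])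
    show "\<forall>\<pi>\<in>{\<pi>. \<pi> permutes {..<N}}. \<pi> \<circ> \<pi>0 \<circ> inv \<pi>0 = \<pi>"
         "\<forall>\<pi>\<in>{\<pi>. \<pi> permutes {..<N}}. \<pi> \<circ> inv \<pi>0 \<circ> \<pi>0 = \<pi>"
      using permutes_inverses[OF \<pi>0] by (auto simp: fun_eq_iff)
  qed (use permutes_compose[OF \<pi>0] permutes_compose[OF permutes_inv[OF \<pi>0]] in auto)
  then have "(\<Sum>\<pi> | \<pi> permutes {..<N}. F (\<lambda>y. h (reindex N (\<pi> \<circ> \<pi>0) y))) =
      (\<Sum>\<pi> | \<pi> permutes {..<N}. F (\<lambda>y. h (reindex N \<pi> y)))"
    by (rule sum.reindex_bij_betw)
  ultimately show ?thesis by (simp add: Phi_def)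
qed

text \<open>Since U_op N n g is symmetric, the average over permutations does not change F on it.\<close>
lemma Phi_U_op: "g \<in> B_n \<Longrightarrow> Phi (U_op N n g) = E g"
  by (simp add: Phi_def U_op_reindex_permutes F_U_op card_permutations)

lemma Phi_reindex_id: "g \<in> B_n \<Longrightarrow> Phi (\<lambda>y. g (reindex n id y)) = E g"
proof -
  assume g: "g \<in> B_n"
  have g_reindex: "(\<lambda>y. g (reindex n \<sigma> y)) \<in> B_N" if "\<sigma> \<in> injs n N" for \<sigma>
    using that g by (intro bounded_measurable_reindex) (auto dest: injs_less)
  have each: "Phi (\<lambda>y. g (reindex n \<sigma> y)) = Phi (\<lambda>y. g (reindex n id y))" if \<sigma>: "\<sigma> \<in> injs n N" for \<sigma>
  proof -
    obtain \<pi> where \<pi>: "\<pi> permutes {..<N}"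
      "\<And>y :: nat \<Rightarrow> 'a. reindex n \<sigma> y = reindex n id (reindex N \<pi> y)"
      using reindex_injs_factor[OF \<sigma> n_le_N] by blast
    have g_id: "(\<lambda>y. g (reindex n id y)) \<in> B_N" using g n_le_N by (intro bounded_measurable_reindex) auto
    have "Phi (\<lambda>y. g (reindex n \<sigma> y)) = Phi (\<lambda>y. (\<lambda>z. g (reindex n id z)) (reindex N \<pi> y))"
      by (simp only: \<pi>(2))
    also have "\<dots> = Phi (\<lambda>z. g (reindex n id z))" by (rule Phi_reindex_permutes[OF \<pi>(1) g_id])
    finally show ?thesis .
  qed
  have "U_op N n g = (1 / ffact N n) *\<^sub>R (\<Sum>\<sigma>\<in>injs n N. (\<lambda>y. g (reindex n \<sigma> y)))"
    by (simp add: fun_eq_iff U_op_reindex sum_fun_apply)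
  then have "E g = (1 / ffact N n) * (\<Sum>\<sigma>\<in>injs n N. Phi (\<lambda>y. g (reindex n \<sigma> y)))"
    using Phi_U_op[OF g] g_reindex
    by (simp add: Phi_scaleR Phi_sum finite_injs subspace_sum[OF subspace_bounded_measurable])
  also have "\<dots> = Phi (\<lambda>y. g (reindex n id y))"
    using each ffact_pos[OF n_le_N] by (simp add: ffact_eq_card_injs)
  finally show ?thesis by simp
qed

definition mu :: "(nat \<Rightarrow> 'a) set \<Rightarrow> real" where
  "mu A = Phi (indicator A)"

lemma mu_nonneg: "A \<in> sets (SB N) \<Longrightarrow> 0 \<le> mu A"
  unfolding mu_def by (rule Phi_nonneg[OF bounded_measurable_indicator]) auto

lemma mu_eq_Phi:
  "A \<in> sets (SB N) \<Longrightarrow> h \<in> B_N \<Longrightarrow> (\<And>x. x \<in> \<Omega> \<Longrightarrow> indicator A x = h x) \<Longrightarrow> mu A = Phi h"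
  unfolding mu_def by (rule Phi_cong[OF bounded_measurable_indicator])

lemma mu_space: "mu \<Omega> = 1"
  using mu_eq_Phi[OF sets.top bounded_measurable_const, of 1] by (simp add: Phi_const)

lemma mu_empty: "mu {} = 0"
  using Phi_const[of 0] by (simp add: mu_def indicator_def[abs_def])

lemma mu_Un:
  assumes "A \<in> sets (SB N)" "B \<in> sets (SB N)" "A \<inter> B = {}"
  shows "mu (A \<union> B) = mu A + mu B"
proof -
  have "indicator (A \<union> B) = indicator A + (indicator B :: _ \<Rightarrow> real)"
    using assms(3) by (auto simp: fun_eq_iff indicator_def)
  then show ?thesis
    unfolding mu_def using Phi_add[OF bounded_measurable_indicator bounded_measurable_indicator] assms
    by simp
qed

lemma mu_mono: "A \<in> sets (SB N) \<Longrightarrow> B \<in> sets (SB N) \<Longrightarrow> A \<subseteq> B \<Longrightarrow> mu A \<le> mu B"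
  using mu_Un[of A "B - A"] mu_nonneg[of "B - A"] by (simp add: Un_absorb1)

lemma mu_Un_le: "A \<in> sets (SB N) \<Longrightarrow> B \<in> sets (SB N) \<Longrightarrow> mu (A \<union> B) \<le> mu A + mu B"
  using mu_Un[of A "B - A"] mu_mono[of "B - A" B] by auto

lemma mu_UN_le:
  "finite I \<Longrightarrow> (\<And>i. i \<in> I \<Longrightarrow> A i \<in> sets (SB N)) \<Longrightarrow> mu (\<Union>i\<in>I. A i) \<le> (\<Sum>i\<in>I. mu (A i))"
proof (induction I rule: finite_induct)
  case (insert i I)
  then have "mu (\<Union>j\<in>insert i I. A j) \<le> mu (A i) + mu (\<Union>j\<in>I. A j)"
    by (auto intro!: mu_Un_le)
  with insert show ?case by simp
qed (simp add: mu_empty)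

lemma mu_preimage_reindex_permutes:
  assumes \<pi>: "\<pi> permutes {..<N}" and A: "A \<in> sets (SB N)"
  shows "mu {y \<in> \<Omega>. reindex N \<pi> y \<in> A} = mu A"
proof -
  have "reindex N \<pi> \<in> measurable (SB N) (SB N)"
    by (rule measurable_reindex) (rule permutes_lessThan_less[OF \<pi>])
  then have S: "{y \<in> \<Omega>. reindex N \<pi> y \<in> A} \<in> sets (SB N)"
    using measurable_sets[OF _ A] by (simp add: vimage_def Int_def conj_commute)
  have "mu {y \<in> \<Omega>. reindex N \<pi> y \<in> A} = Phi (\<lambda>y. indicator A (reindex N \<pi> y))"
    by (rule mu_eq_Phi[OF S bounded_measurable_reindex_permutes[OF bounded_measurable_indicator[OF A] \<pi>]])
       (auto simp: indicator_def)
  also have "\<dots> = mu A"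
    unfolding mu_def by (rule Phi_reindex_permutes[OF \<pi> bounded_measurable_indicator[OF A]])
  finally show ?thesis .
qed

lemma mu_preimage_reindex_id:
  assumes B: "B \<in> sets (SB n)"
  shows "{y \<in> \<Omega>. reindex n id y \<in> B} \<in> sets (SB N)"
    and "mu {y \<in> \<Omega>. reindex n id y \<in> B} = measure M (X -` B \<inter> space M)"
proof -
  have "reindex n id \<in> measurable (SB N) (SB n)" by (rule measurable_reindex) (use n_le_N in auto)
  then show S: "{y \<in> \<Omega>. reindex n id y \<in> B} \<in> sets (SB N)"
    using measurable_sets[OF _ B] by (simp add: vimage_def Int_def conj_commute)
  have "mu {y \<in> \<Omega>. reindex n id y \<in> B} = Phi (\<lambda>y. indicator B (reindex n id y))"
    using n_le_N
    by (intro mu_eq_Phi[OF S] bounded_measurable_reindex[OF bounded_measurable_indicator[OF B]])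
       (auto simp: indicator_def)
  also have "\<dots> = E (indicator B)" by (rule Phi_reindex_id[OF bounded_measurable_indicator[OF B]])
  also have "\<dots> = measure (distr M (SB n) X) B"
    unfolding E_def using B X by (simp add: integral_distr[symmetric])
  also have "\<dots> = measure M (X -` B \<inter> space M)" by (rule measure_distr[OF X B])
  finally show "mu {y \<in> \<Omega>. reindex n id y \<in> B} = measure M (X -` B \<inter> space M)" .
qed

abbreviation law_X0 :: "'a measure" where
  "law_X0 \<equiv> distr M borel (\<lambda>w. X w 0)"

lemma measurable_X0: "(\<lambda>w. X w 0) \<in> measurable M borel"
  using n_pos unfolding Sn_def
  by (intro measurable_compose[OF X[unfolded Sn_def]] measurable_component_singleton) auto

text \<open>Move coordinate i to 0 by a transposition, then read off the n-marginal.\<close>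
lemma mu_coordinate:
  assumes A: "A \<in> sets borel" and i: "i < N"
  shows "mu {y \<in> \<Omega>. y i \<in> A} = measure law_X0 A"
proof -
  define \<pi> where "\<pi> = Transposition.transpose 0 i"
  have \<pi>: "\<pi> permutes {..<N}" unfolding \<pi>_def by (rule permutes_swap_id) (use i in auto)
  have "{y \<in> \<Omega>. y i \<in> A} = {y \<in> \<Omega>. reindex N \<pi> y \<in> {y \<in> \<Omega>. y 0 \<in> A}}"
    using i reindex_in_space unfolding \<pi>_def by (auto simp: reindex_def)
  then have "mu {y \<in> \<Omega>. y i \<in> A} = mu {y \<in> \<Omega>. y 0 \<in> A}"
    using mu_preimage_reindex_permutes[OF \<pi> measurable_coordinate_set[OF A]] i by simp
  also have "{y \<in> \<Omega>. y 0 \<in> A} = {y \<in> \<Omega>. reindex n id y \<in> {z \<in> space (SB n). z 0 \<in> A}}"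
    using n_pos reindex_in_space by (auto simp: reindex_def)
  also have "mu \<dots> = measure M (X -` {z \<in> space (SB n). z 0 \<in> A} \<inter> space M)"
    by (rule mu_preimage_reindex_id(2)[OF measurable_coordinate_set[OF A n_pos]])
  also have "X -` {z \<in> space (SB n). z 0 \<in> A} \<inter> space M = (\<lambda>w. X w 0) -` A \<inter> space M"
    using measurable_space[OF X] by auto
  also have "measure M \<dots> = measure law_X0 A" by (rule measure_distr[OF measurable_X0 A, symmetric])
  finally show ?thesis .
qed

abbreviation T_N :: "(nat \<Rightarrow> 'a) topology" where
  "T_N \<equiv> product_topology (\<lambda>_. euclidean) {..<N}"

lemma prob_space_law_X0: "prob_space law_X0"
  by (rule prob_space.prob_space_distr[OF M measurable_X0])

text \<open>Tightness and outer regularity of the one-dimensional law pass to the boxes because the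
  N coordinates of mu all have that law.\<close>
lemma mu_borel_box_inner_compact:
  assumes r: "r \<in> borel_boxes N" and e: "e > 0"
  obtains K where "K \<subseteq> r" "compactin T_N K" "K \<in> sets (SB N)" "mu (r - K) \<le> e"
proof -
  obtain A where A: "r = PiE {..<N} A" "\<forall>i<N. A i \<in> sets borel" using r unfolding borel_boxes_def by blast
  have N_pos: "0 < N" using n_pos n_le_N by simp
  have "\<exists>K. compact K \<and> K \<subseteq> A i \<and> measure law_X0 (A i - K) \<le> e / N" if i: "i < N" for i
  proof -
    obtain K where "compact K" "K \<subseteq> A i" "measure law_X0 (A i - K) \<le> e / N"
      using tight_outer_regular_inner_compact[OF prob_space_law_X0 _ outer_regular tight, of "A i" "e / N"]
        A(2) i e N_pos by auto
    then show ?thesis by blast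
  qed
  then obtain Kf where Kf: "\<And>i. i < N \<Longrightarrow> compact (Kf i) \<and> Kf i \<subseteq> A i \<and> measure law_X0 (A i - Kf i) \<le> e / N"
    by metis
  define K where "K = PiE {..<N} Kf"
  have Kf_borel: "Kf i \<in> sets borel" if "i < N" for i
    using Kf[OF that] by (auto intro: borel_closed compact_imp_closed)
  have K: "K \<in> sets (SB N)" unfolding K_def Sn_def by (rule sets_PiM_I_finite) (use Kf_borel in auto)
  have diff: "{y \<in> \<Omega>. y i \<in> A i - Kf i} \<in> sets (SB N)" if "i < N" for i
    using that A(2) Kf_borel by (intro measurable_coordinate_set) auto
  have "r - K \<subseteq> (\<Union>i<N. {y \<in> \<Omega>. y i \<in> A i - Kf i})"
    unfolding A(1) K_def by (auto simp: space_Sn PiE_iff)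
  then have "mu (r - K) \<le> mu (\<Union>i<N. {y \<in> \<Omega>. y i \<in> A i - Kf i})"
    using r borel_boxes_sets K diff by (intro mu_mono) auto
  also have "\<dots> \<le> (\<Sum>i<N. mu {y \<in> \<Omega>. y i \<in> A i - Kf i})" by (rule mu_UN_le) (use diff in auto)
  also have "\<dots> = (\<Sum>i<N. measure law_X0 (A i - Kf i))"
    using A(2) Kf_borel by (intro sum.cong refl mu_coordinate) auto
  also have "\<dots> \<le> (\<Sum>i<N. e / N)" by (rule sum_mono) (use Kf in auto)
  also have "\<dots> = e" using N_pos by simp
  finally have "mu (r - K) \<le> e" .
  moreover have "K \<subseteq> r" using Kf unfolding K_def A(1) by (auto simp: PiE_mono)
  moreover have "compactin T_N K" using Kf unfolding K_def by (auto simp: compactin_PiE)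
  ultimately show ?thesis using K that by blast
qed

lemma mu_box_ring_inner_compact:
  assumes "A \<in> box_ring N" "e > 0"
  obtains K where "K \<subseteq> A" "compactin T_N K" "K \<in> sets (SB N)" "mu (A - K) \<le> e"
proof -
  obtain G where G: "finite G" "G \<subseteq> borel_boxes N" "A = \<Union>G" using assms(1) unfolding box_ring_def by blast
  have "\<forall>e>0. \<exists>K. K \<subseteq> \<Union>G \<and> compactin T_N K \<and> K \<in> sets (SB N) \<and> mu (\<Union>G - K) \<le> e"
    using G(1,2)
  proof (induction G rule: finite_induct)
    case empty
    then show ?case using mu_empty by (intro allI impI exI[of _ "{}"]) auto
  next
    case (insert r G)
    show ?case
    proof (intro allI impI)
      fix e :: real assume e: "e > 0"
      obtain K1 where K1: "K1 \<subseteq> r" "compactin T_N K1" "K1 \<in> sets (SB N)" "mu (r - K1) \<le> e / 2"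
        using mu_borel_box_inner_compact[of r "e / 2"] insert.prems e by auto
      obtain K2 where K2: "K2 \<subseteq> \<Union>G" "compactin T_N K2" "K2 \<in> sets (SB N)" "mu (\<Union>G - K2) \<le> e / 2"
        using insert e by (meson half_gt_zero insert_subset)
      have sets: "r \<in> sets (SB N)" "\<Union>G \<in> sets (SB N)"
        using insert.prems insert.hyps(1) borel_boxes_sets by auto
      have "mu (\<Union>(insert r G) - (K1 \<union> K2)) \<le> mu ((r - K1) \<union> (\<Union>G - K2))"
        using sets K1 K2 by (intro mu_mono) auto
      also have "\<dots> \<le> mu (r - K1) + mu (\<Union>G - K2)" using sets K1 K2 by (intro mu_Un_le) auto
      finally show "\<exists>K. K \<subseteq> \<Union>(insert r G) \<and> compactin T_N K \<and> K \<in> sets (SB N) \<and>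
          mu (\<Union>(insert r G) - K) \<le> e"
        using K1 K2 by (intro exI[of _ "K1 \<union> K2"]) (auto intro: compactin_Un)
    qed
  qed
  then show ?thesis using assms(2) that unfolding G(3) by blast
qed

text \<open>The compact approximations K_k of A_k have empty intersection, so finitely many already do,
  and then A_k is covered by the small differences A_j - K_j with j \<le> k.\<close>
lemma mu_box_ring_decseq_small:
  assumes A: "range A \<subseteq> box_ring N" "decseq A" "(\<Inter>i. A i) = {}" and e: "e > 0"
  obtains m where "\<And>k. k \<ge> m \<Longrightarrow> mu (A k) \<le> e"
proof -
  have "\<exists>K. K \<subseteq> A k \<and> compactin T_N K \<and> K \<in> sets (SB N) \<and> mu (A k - K) \<le> e / 2 ^ Suc k" for k
  proof -
    have "A k \<in> box_ring N" "e / 2 ^ Suc k > 0" using A(1) e by auto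
    then obtain K where "K \<subseteq> A k" "compactin T_N K" "K \<in> sets (SB N)" "mu (A k - K) \<le> e / 2 ^ Suc k"
      by (rule mu_box_ring_inner_compact)
    then show ?thesis by blast
  qed
  then obtain K where "\<forall>k. K k \<subseteq> A k \<and> compactin T_N (K k) \<and> K k \<in> sets (SB N) \<and>
      mu (A k - K k) \<le> e / 2 ^ Suc k"
    by metis
  then have K: "\<And>k. K k \<subseteq> A k" "\<And>k. compactin T_N (K k)" "\<And>k. K k \<in> sets (SB N)"
    "\<And>k. mu (A k - K k) \<le> e / 2 ^ Suc k"
    by blast+
  have T: "Hausdorff_space T_N"
    unfolding Hausdorff_space_product_topology using Hausdorff_space_euclidean_t2 by auto
  have "(\<Inter>k. K k) \<subseteq> (\<Inter>k. A k)" using K(1) by (intro INF_mono) auto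
  then have "(\<Inter>k. K k) = {}" using A(3) by simp
  then obtain m where m: "(\<Inter>k\<le>m. K k) = {}" by (rule compactin_Inter_empty_finite[OF T K(2)])
  have A_sets: "A j \<in> sets (SB N)" for j using A(1) box_ring_sets by blast
  have D_sets: "A j - K j \<in> sets (SB N)" for j using A_sets K(3) by blast
  have "mu (A k) \<le> e" if k: "k \<ge> m" for k
  proof -
    have "A k \<subseteq> (\<Union>j\<le>k. A j - K j)"
    proof
      fix x assume x: "x \<in> A k"
      obtain j where "j \<le> m" "x \<notin> K j" using m by blast
      with x k show "x \<in> (\<Union>j\<le>k. A j - K j)" using decseqD[OF A(2), of j k] by auto
    qed
    then have "mu (A k) \<le> mu (\<Union>j\<le>k. A j - K j)" using A_sets D_sets by (intro mu_mono) auto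
    also have "\<dots> \<le> (\<Sum>j\<le>k. mu (A j - K j))" by (rule mu_UN_le) (simp_all add: D_sets)
    also have "\<dots> \<le> (\<Sum>j\<le>k. e / 2 ^ Suc j)" by (rule sum_mono) (rule K(4))
    also have "\<dots> = e - e / 2 ^ Suc k" by (induction k) (auto simp: field_simps)
    also have "\<dots> \<le> e" using e by simp
    finally show ?thesis .
  qed
  then show ?thesis by (rule that)
qed

lemma mu_box_ring_decseq_tendsto_0:
  assumes "range A \<subseteq> box_ring N" "decseq A" "(\<Inter>i. A i) = {}"
  shows "(\<lambda>i. mu (A i)) \<longlonglongrightarrow> 0"
proof (rule metric_LIMSEQ_I)
  fix r :: real assume r: "r > 0"
  obtain m where m: "\<And>k. k \<ge> m \<Longrightarrow> mu (A k) \<le> r / 2"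
    using mu_box_ring_decseq_small[OF assms, of "r / 2"] r by auto
  have "dist (mu (A k)) 0 < r" if "k \<ge> m" for k
  proof -
    have "A k \<in> sets (SB N)" using assms(1) box_ring_sets by blast
    then show ?thesis using m[OF that] mu_nonneg[of "A k"] r by (simp add: dist_real_def)
  qed
  then show "\<exists>m. \<forall>k\<ge>m. dist (mu (A k)) 0 < r" by blast
qed

lemma measure_extending_mu_exists:
  "\<exists>Q. sets Q = sets (SB N) \<and> space Q = \<Omega> \<and> (\<forall>A\<in>box_ring N. emeasure Q A = ennreal (mu A))"
proof -
  interpret ring_of_sets \<Omega> "box_ring N" by (rule ring_of_sets_box_ring)
  have mu_additive: "additive (box_ring N) (\<lambda>A. ennreal (mu A))"
    unfolding additive_def
  proof (intro ballI impI)
    fix A B :: "(nat \<Rightarrow> 'a) set"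
    assume AB: "A \<in> box_ring N" "B \<in> box_ring N" "A \<inter> B = {}"
    then have "A \<in> sets (SB N)" "B \<in> sets (SB N)" using box_ring_sets by blast+
    then show "ennreal (mu (A \<union> B)) = ennreal (mu A) + ennreal (mu B)"
      using AB(3) by (simp add: mu_Un mu_nonneg)
  qed
  have "\<exists>\<mu> :: (nat \<Rightarrow> 'a) set \<Rightarrow> ennreal. (\<forall>A\<in>box_ring N. \<mu> A = ennreal (mu A)) \<and>
      measure_space \<Omega> (sigma_sets \<Omega> (box_ring N)) \<mu>"
    using mu_empty mu_additive mu_box_ring_decseq_tendsto_0
    by (intro caratheodory_empty_continuous) (auto simp: positive_def intro: tendsto_ennrealI[of _ 0, simplified])
  then obtain \<mu> where \<mu>: "\<forall>A\<in>box_ring N. \<mu> A = ennreal (mu A)" "measure_space \<Omega> (sets (SB N)) \<mu>"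
    unfolding sigma_sets_box_ring by blast
  define Q where "Q = measure_of \<Omega> (sets (SB N)) \<mu>"
  have "sets Q = sets (SB N)" "space Q = \<Omega>"
    unfolding Q_def using sets.space_closed[of "SB N"] sets.sigma_sets_eq[of "SB N"] by auto
  moreover have "emeasure Q A = ennreal (mu A)" if "A \<in> box_ring N" for A
    using \<mu> that box_ring_sets unfolding Q_def measure_space_def
    by (subst emeasure_measure_of_sigma) auto
  ultimately show ?thesis by blast
qed

definition Q :: "(nat \<Rightarrow> 'a) measure" where
  "Q = (SOME Q. sets Q = sets (SB N) \<and> space Q = \<Omega> \<and> (\<forall>A\<in>box_ring N. emeasure Q A = ennreal (mu A)))"

lemma
  shows sets_Q: "sets Q = sets (SB N)"
    and space_Q: "space Q = \<Omega>"
    and emeasure_Q: "A \<in> box_ring N \<Longrightarrow> emeasure Q A = ennreal (mu A)"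
  using someI_ex[OF measure_extending_mu_exists] unfolding Q_def[symmetric] by blast+

lemma emeasure_Q_borel_box: "A \<in> borel_boxes N \<Longrightarrow> emeasure Q A = ennreal (mu A)"
  by (rule emeasure_Q) (auto simp: box_ring_def intro!: exI[of _ "{A}"])

lemma prob_space_Q: "prob_space Q"
  by (rule prob_spaceI) (simp add: space_Q emeasure_Q_borel_box[OF space_in_borel_boxes] mu_space)

lemma exchangeable_law_Q: "exchangeable_law N Q"
  unfolding exchangeable_law_def
proof (intro allI impI)
  interpret prob_space Q by (rule prob_space_Q)
  fix \<pi> assume \<pi>: "\<pi> permutes {..<N}"
  have reindex_meas: "reindex N \<pi> \<in> measurable Q (SB N)"
    unfolding measurable_cong_sets[OF sets_Q refl] by (rule measurable_reindex[OF permutes_lessThan_less[OF \<pi>]])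
  show "distr Q (SB N) (\<lambda>x. \<lambda>i\<in>{..<N}. x (\<pi> i)) = Q"
    unfolding reindex_def[symmetric]
  proof (rule measure_eqI_generator_eq[where A="\<lambda>_. \<Omega>"])
    show "Int_stable (borel_boxes N)" by (auto simp: Int_stable_def intro: borel_boxes_Int)
    show "range (\<lambda>_. \<Omega>) \<subseteq> borel_boxes N" using space_in_borel_boxes by auto
    show "borel_boxes N \<subseteq> Pow \<Omega>" using borel_boxes_sets sets.space_closed by blast
    show "sets (distr Q (SB N) (reindex N \<pi>)) = sigma_sets \<Omega> (borel_boxes N)"
      "sets Q = sigma_sets \<Omega> (borel_boxes N)"
      using sets_SB_eq_sigma_borel_boxes sets_Q by simp_all
    show "emeasure (distr Q (SB N) (reindex N \<pi>)) \<Omega> \<noteq> \<infinity>"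
      by (simp add: emeasure_distr[OF reindex_meas] emeasure_eq_measure)
  next
    fix Y :: "(nat \<Rightarrow> 'a) set" assume Y: "Y \<in> borel_boxes N"
    have Y_sets: "Y \<in> sets (SB N)" using Y borel_boxes_sets by blast
    have "emeasure (distr Q (SB N) (reindex N \<pi>)) Y = emeasure Q {y \<in> \<Omega>. reindex N \<pi> y \<in> Y}"
      by (simp add: emeasure_distr[OF reindex_meas Y_sets] space_Q vimage_def Int_def conj_commute)
    also have "\<dots> = ennreal (mu {y \<in> \<Omega>. reindex N \<pi> y \<in> Y})"
      by (rule emeasure_Q_borel_box[OF preimage_reindex_permutes_borel_box[OF \<pi> Y]])
    also have "\<dots> = emeasure Q Y"
      by (simp add: mu_preimage_reindex_permutes[OF \<pi> Y_sets] emeasure_Q_borel_box[OF Y])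
    finally show "emeasure (distr Q (SB N) (reindex N \<pi>)) Y = emeasure Q Y" .
  qed simp
qed

lemma distr_Q_reindex_id: "distr Q (SB n) (reindex n id) = distr M (SB n) X"
proof -
  interpret Q: prob_space Q by (rule prob_space_Q)
  interpret M: prob_space M by (rule M)
  let ?E = "prod_algebra {..<n} (\<lambda>_. borel :: 'a measure)"
  have reindex_meas: "reindex n id \<in> measurable Q (SB n)"
    unfolding measurable_cong_sets[OF sets_Q refl] by (rule measurable_reindex) (use n_le_N in auto)
  have sets_eq: "sets (SB n) = sigma_sets (space (SB n)) ?E"
    unfolding Sn_def sets_PiM space_PiM by simp
  show ?thesis
  proof (rule measure_eqI_generator_eq[OF Int_stable_prod_algebra, where A="\<lambda>_. space (SB n)"])
    show "range (\<lambda>_. space (SB n)) \<subseteq> ?E"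
      using space_in_prod_algebra[of "{..<n}" "\<lambda>_. borel :: 'a measure"] by (auto simp: Sn_def space_PiM)
    show "?E \<subseteq> Pow (space (SB n))" unfolding Sn_def space_PiM by (rule prod_algebra_sets_into_space)
    show "sets (distr Q (SB n) (reindex n id)) = sigma_sets (space (SB n)) ?E"
      "sets (distr M (SB n) X) = sigma_sets (space (SB n)) ?E"
      using sets_eq by simp_all
    show "emeasure (distr Q (SB n) (reindex n id)) (space (SB n)) \<noteq> \<infinity>"
      by (simp add: emeasure_distr[OF reindex_meas] Q.emeasure_eq_measure)
  next
    fix Y :: "(nat \<Rightarrow> 'a) set" assume Y: "Y \<in> ?E"
    have Y_sets: "Y \<in> sets (SB n)" unfolding sets_eq by (rule sigma_sets.Basic[OF Y])
    have "emeasure (distr Q (SB n) (reindex n id)) Y = emeasure Q {y \<in> \<Omega>. reindex n id y \<in> Y}"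
      by (simp add: emeasure_distr[OF reindex_meas Y_sets] space_Q vimage_def Int_def conj_commute)
    also have "\<dots> = ennreal (mu {y \<in> \<Omega>. reindex n id y \<in> Y})"
      by (rule emeasure_Q_borel_box[OF preimage_reindex_id_borel_box[OF Y n_le_N]])
    also have "\<dots> = emeasure (distr M (SB n) X) Y"
      by (simp add: mu_preimage_reindex_id(2)[OF Y_sets] emeasure_distr[OF X Y_sets] M.emeasure_eq_measure)
    finally show "emeasure (distr Q (SB n) (reindex n id)) Y = emeasure (distr M (SB n) X) Y" .
  qed simp
qed

lemma extendible: "extendible M n N X"
  unfolding extendible_def
  using prob_space_Q sets_Q exchangeable_law_Q distr_Q_reindex_id[unfolded reindex_id] by blast

end

theorem theorem2:
  fixes M :: "'w measure" and X :: "'w \<Rightarrow> nat \<Rightarrow> 'a::t2_space" and n N :: nat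
  assumes "locally_compact_space (euclidean :: 'a topology)"
    and "0 < n" and "n \<le> N"
    and "prob_space M"
    and "X \<in> measurable M (SB n)"
    and "exchangeable M n X"
    and "outer_regular (distr M borel (\<lambda>w. X w 0))"
    and "tight_measure (distr M borel (\<lambda>w. X w 0))"
  shows "extendible M n N X \<longleftrightarrow> ext_norm M n N X = 1"
proof
  assume "extendible M n N X"
  then show "ext_norm M n N X = 1"
    unfolding ext_norm_eq_1_iff[OF assms(4,3)]
    using extendible_imp_abs_integral_le_1[OF _ assms(4,5,3)] by blast
next
  assume "ext_norm M n N X = 1"
  then have "\<And>g. g \<in> bounded_measurable (SB n) \<Longrightarrow> (\<forall>x\<in>space (SB N). \<bar>U_op N n g x\<bar> \<le> 1) \<Longrightarrow>
      \<bar>integral\<^sup>L M (\<lambda>w. g (X w))\<bar> \<le> 1"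
    unfolding ext_norm_eq_1_iff[OF assms(4,3)] by blast
  then interpret extension_construction M X n N
    by (rule extension_construction.intro[OF assms(2-5,8,7)])
  show "extendible M n N X" by (rule extendible)
qed

end
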